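(* Let $G\subset U(V)$ be a finite pseudo reflection group and $\Upsilon$ any admissible parameter set. Then $B_G(\Upsilon)$ is a finite-dimensional $\mathbb C$-algebra, and the linear map $\mathbb CG\to B_G(\Upsilon)$, $w\mapsto T_w$, is an injective algebra homomorphism.
   Context: Let $V$ be a finite-dimensional complex vector space and $G\subset U(V)$ a finite pseudo reflection group (a finite group generated by pseudo reflections, i.e. elements conjugate in $GL(V)$ to $\mathrm{diag}(\xi,1,\dots,1)$ with $\xi\neq1$ a root of unity). Let $R$ be the set of pseudo reflections in $G$ and $\mathcal A=\{H_i\}_{i\in P}$ the set of their reflecting hyperplanes, indexed by a finite set $P$. For $s\in R$ let $i(s)$ be the index with $H_{i(s)}$ the hyperplane fixed pointwise by $s$. $G$ permutes $\mathcal A$; write $w(i)$ for the index with $H_{w(i)}=w(H_i)$ and $i\sim j$ if $j=w(i)$ for some $w\in G$. Put $R(i,j)=\{s\in R: s(H_j)=H_i\}$. For $i\in P$ let $G_i$ be the pointwise stabilizer of $H_i$ in $G$ and $s_i\in G_i$ its unique element with exceptional eigenvalue $e^{2\pi\sqrt{-1}/|G_i|}$. An edge is an intersection of hyperplanes of $\mathcal A$. For $i\ne j$ write $H_i\pitchfork H_j$ if $\{k\in P: H_i\cap H_j\subset H_k\}=\{i,j\}$; a codimension-2 edge $L$ is crossing if $L=H_i\cap H_j$ for some $i,j$ with $H_i\pitchfork H_j$, and noncrossing otherwise. For $w\in G$, $V_w=\{v\in V: wv=v\}$. Admissible parameters $\Upsilon=\{\mu_s,\tau_i\}_{s\in R,i\in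 P}$: $\mu_s\in\mathbb C\setminus\{0\}$ with $\mu_s=\mu_{s'}$ whenever $s,s'$ are conjugate in $G$, and $\tau_i\in\mathbb C$ with $\tau_i=\tau_j$ whenever $i\sim j$. The algebra $B_G(\Upsilon)$ is the unital associative $\mathbb C$-algebra generated by $\{T_w\}_{w\in G}\cup\{e_i\}_{i\in P}$ with $T_1=1$ and relations: (0) $T_{w_1}T_{w_2}=T_{w_1w_2}$; (1) $T_{s_i}e_i=e_iT_{s_i}=e_i$ for $i\in P$; (1') $T_we_i=e_iT_w=e_i$ whenever $w(H_i)=H_i$ and $H_i\cap V_w$ is a noncrossing codimension-2 edge; (2) $e_i^2=\tau_ie_i$; (3) $T_we_j=e_iT_w$ whenever $w(H_j)=H_i$; (4) $e_ie_j=e_je_i$ if $H_i\pitchfork H_j$; (5) $e_ie_j=(\sum_{s\in R(i,j)}\mu_sT_s)e_j=e_i(\sum_{s\in R(i,j)}\mu_sT_s)$ if $i\ne j$, $H_i\cap H_j$ is noncrossing and $R(i,j)\neq\emptyset$; (6) $e_ie_j=0$ if $i\ne j$, $H_i\cap H_j$ is noncrossing and $R(i,j)=\emptyset$. *)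

theory Defs
  imports "Jordan_Normal_Form.VS_Connect" "Jordan_Normal_Form.Schur_Decomposition"
begin

section \<open>Linear-algebraic setting: V = C^n with the standard Hermitian product\<close>

definition unitary_mat :: "nat \<Rightarrow> complex mat \<Rightarrow> bool" where
  "unitary_mat n A \<longleftrightarrow> A \<in> carrier_mat n n \<and> A * mat_adjoint A = 1\<^sub>m n"

definition diag_pr :: "nat \<Rightarrow> complex \<Rightarrow> complex mat" where
  "diag_pr n xi = mat n n (\<lambda>(i,j). if i = j then (if i = 0 then xi else 1) else 0)"

definition pseudo_reflection :: "nat \<Rightarrow> complex mat \<Rightarrow> bool" where
  "pseudo_reflection n s \<longleftrightarrow> 0 < n \<and> s \<in> carrier_mat n n \<and>
     (\<exists>P \<in> carrier_mat n n. \<exists>Q \<in> carrier_mat n n. P * Q = 1\<^sub>m n \<and> Q * P = 1\<^sub>m n \<and>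
        (\<exists>xi. xi \<noteq> 1 \<and> (\<exists>k::nat. 0 < k \<and> xi ^ k = 1) \<and> Q * s * P = diag_pr n xi))"

text \<open>subgroup generated: for a finite group this is the submonoid generated\<close>
inductive_set gen_monoid :: "nat \<Rightarrow> complex mat set \<Rightarrow> complex mat set"
  for n :: nat and S :: "complex mat set" where
  one: "1\<^sub>m n \<in> gen_monoid n S"
| step: "s \<in> S \<Longrightarrow> x \<in> gen_monoid n S \<Longrightarrow> s * x \<in> gen_monoid n S"

definition refls :: "nat \<Rightarrow> complex mat set \<Rightarrow> complex mat set" where
  "refls n G = {s \<in> G. pseudo_reflection n s}"

definition finite_pseudo_reflection_group :: "nat \<Rightarrow> complex mat set \<Rightarrow> bool" where
  "finite_pseudo_reflection_group n G \<longleftrightarrow>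
     finite G \<and> G \<subseteq> carrier_mat n n \<and> 1\<^sub>m n \<in> G \<and>
     (\<forall>A\<in>G. \<forall>B\<in>G. A * B \<in> G) \<and> (\<forall>A\<in>G. \<exists>B\<in>G. A * B = 1\<^sub>m n) \<and>
     (\<forall>A\<in>G. unitary_mat n A) \<and>
     G = gen_monoid n (refls n G)"

definition fix_space :: "nat \<Rightarrow> complex mat \<Rightarrow> complex vec set" where
  "fix_space n w = {v \<in> carrier_vec n. w *\<^sub>v v = v}"

text \<open>the reflecting hyperplanes (they serve as their own indices, P = A)\<close>
definition hyps :: "nat \<Rightarrow> complex mat set \<Rightarrow> complex vec set set" where
  "hyps n G = fix_space n ` refls n G"

definition img :: "complex mat \<Rightarrow> complex vec set \<Rightarrow> complex vec set" where
  "img w H = (\<lambda>v. w *\<^sub>v v) ` H"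

definition hyp_equiv :: "complex mat set \<Rightarrow> complex vec set \<Rightarrow> complex vec set \<Rightarrow> bool" where
  "hyp_equiv G H K \<longleftrightarrow> (\<exists>w\<in>G. img w H = K)"

definition R_between :: "nat \<Rightarrow> complex mat set \<Rightarrow> complex vec set \<Rightarrow> complex vec set \<Rightarrow> complex mat set" where
  "R_between n G H K = {s \<in> refls n G. img s K = H}"

definition pw_stab :: "complex mat set \<Rightarrow> complex vec set \<Rightarrow> complex mat set" where
  "pw_stab G H = {w \<in> G. \<forall>v\<in>H. w *\<^sub>v v = v}"

definition dist_refl :: "nat \<Rightarrow> complex mat set \<Rightarrow> complex vec set \<Rightarrow> complex mat" where
  "dist_refl n G H = (THE s. s \<in> pw_stab G H \<and>
     (\<exists>v \<in> carrier_vec n. v \<noteq> 0\<^sub>v n \<and>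
        s *\<^sub>v v = exp (2 * pi * \<i> / of_nat (card (pw_stab G H))) \<cdot>\<^sub>v v))"

definition sub_dim :: "nat \<Rightarrow> complex vec set \<Rightarrow> nat" where
  "sub_dim n L = vectorspace.dim class_ring ((module_vec TYPE(complex) n)\<lparr>carrier := L\<rparr>)"

definition is_edge :: "nat \<Rightarrow> complex mat set \<Rightarrow> complex vec set \<Rightarrow> bool" where
  "is_edge n G L \<longleftrightarrow> (\<exists>S. S \<subseteq> hyps n G \<and> S \<noteq> {} \<and> L = \<Inter> S)"

definition codim2_edge :: "nat \<Rightarrow> complex mat set \<Rightarrow> complex vec set \<Rightarrow> bool" where
  "codim2_edge n G L \<longleftrightarrow> is_edge n G L \<and> n - sub_dim n L = 2"

definition transversal :: "nat \<Rightarrow> complex mat set \<Rightarrow> complex vec set \<Rightarrow> complex vec set \<Rightarrow> bool" where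
  "transversal n G H K \<longleftrightarrow> H \<noteq> K \<and> {M \<in> hyps n G. H \<inter> K \<subseteq> M} = {H, K}"

definition crossing_edge :: "nat \<Rightarrow> complex mat set \<Rightarrow> complex vec set \<Rightarrow> bool" where
  "crossing_edge n G L \<longleftrightarrow> codim2_edge n G L \<and>
     (\<exists>H\<in>hyps n G. \<exists>K\<in>hyps n G. transversal n G H K \<and> L = H \<inter> K)"

definition noncrossing_edge :: "nat \<Rightarrow> complex mat set \<Rightarrow> complex vec set \<Rightarrow> bool" where
  "noncrossing_edge n G L \<longleftrightarrow> codim2_edge n G L \<and> \<not> crossing_edge n G L"

definition admissible :: "nat \<Rightarrow> complex mat set \<Rightarrow> (complex mat \<Rightarrow> complex) \<Rightarrow> (complex vec set \<Rightarrow> complex) \<Rightarrow> bool" where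
  "admissible n G mu tau \<longleftrightarrow>
     (\<forall>s\<in>refls n G. mu s \<noteq> 0) \<and>
     (\<forall>s\<in>refls n G. \<forall>s'\<in>refls n G. (\<exists>g\<in>G. g * s = s' * g) \<longrightarrow> mu s = mu s') \<and>
     (\<forall>H\<in>hyps n G. \<forall>K\<in>hyps n G. hyp_equiv G H K \<longrightarrow> tau H = tau K)"

datatype ('a, 'b) gen = Tg 'a | Eg 'b

definition FA :: "'g set \<Rightarrow> ('g list \<Rightarrow> complex) set" where
  "FA Gens = {f. finite {w. f w \<noteq> 0} \<and> (\<forall>w. f w \<noteq> 0 \<longrightarrow> set w \<subseteq> Gens)}"

definition fa_one :: "'g list \<Rightarrow> complex" where
  "fa_one = (\<lambda>w. if w = [] then 1 else 0)"

definition fa_gen :: "'g \<Rightarrow> 'g list \<Rightarrow> complex" where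
  "fa_gen x = (\<lambda>w. if w = [x] then 1 else 0)"

definition fa_add :: "('g list \<Rightarrow> complex) \<Rightarrow> ('g list \<Rightarrow> complex) \<Rightarrow> 'g list \<Rightarrow> complex" where
  "fa_add f g = (\<lambda>w. f w + g w)"

definition fa_sub :: "('g list \<Rightarrow> complex) \<Rightarrow> ('g list \<Rightarrow> complex) \<Rightarrow> 'g list \<Rightarrow> complex" where
  "fa_sub f g = (\<lambda>w. f w - g w)"

definition fa_smult :: "complex \<Rightarrow> ('g list \<Rightarrow> complex) \<Rightarrow> 'g list \<Rightarrow> complex" where
  "fa_smult c f = (\<lambda>w. c * f w)"

definition fa_mult :: "('g list \<Rightarrow> complex) \<Rightarrow> ('g list \<Rightarrow> complex) \<Rightarrow> 'g list \<Rightarrow> complex" where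
  "fa_mult f g = (\<lambda>w. \<Sum>k\<le>length w. f (take k w) * g (drop k w))"

definition fa_lincomb :: "('x \<Rightarrow> complex) \<Rightarrow> ('x \<Rightarrow> 'g list \<Rightarrow> complex) \<Rightarrow> 'x set \<Rightarrow> 'g list \<Rightarrow> complex" where
  "fa_lincomb c b S = (\<lambda>w. \<Sum>x\<in>S. c x * b x w)"

inductive_set fa_ideal :: "'g set \<Rightarrow> ('g list \<Rightarrow> complex) set \<Rightarrow> ('g list \<Rightarrow> complex) set"
  for Gens :: "'g set" and Rel :: "('g list \<Rightarrow> complex) set" where
  base: "r \<in> Rel \<Longrightarrow> r \<in> fa_ideal Gens Rel"
| zero: "(\<lambda>w. 0) \<in> fa_ideal Gens Rel"
| add: "x \<in> fa_ideal Gens Rel \<Longrightarrow> y \<in> fa_ideal Gens Rel \<Longrightarrow> fa_add x y \<in> fa_ideal Gens Rel"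
| smult: "x \<in> fa_ideal Gens Rel \<Longrightarrow> fa_smult c x \<in> fa_ideal Gens Rel"
| lmult: "a \<in> FA Gens \<Longrightarrow> x \<in> fa_ideal Gens Rel \<Longrightarrow> fa_mult a x \<in> fa_ideal Gens Rel"
| rmult: "a \<in> FA Gens \<Longrightarrow> x \<in> fa_ideal Gens Rel \<Longrightarrow> fa_mult x a \<in> fa_ideal Gens Rel"

section \<open>The algebra B_G(Upsilon) = FA(generators) / (relations)\<close>

type_synonym bgen = "(complex mat, complex vec set) gen"

definition B_gens :: "nat \<Rightarrow> complex mat set \<Rightarrow> bgen set" where
  "B_gens n G = Tg ` G \<union> Eg ` hyps n G"

abbreviation TT :: "complex mat \<Rightarrow> bgen list \<Rightarrow> complex" where
  "TT w \<equiv> fa_gen (Tg w)"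

abbreviation EE :: "complex vec set \<Rightarrow> bgen list \<Rightarrow> complex" where
  "EE H \<equiv> fa_gen (Eg H)"

definition B_rels :: "nat \<Rightarrow> complex mat set \<Rightarrow> (complex mat \<Rightarrow> complex) \<Rightarrow> (complex vec set \<Rightarrow> complex)
    \<Rightarrow> (bgen list \<Rightarrow> complex) set" where
  "B_rels n G mu tau =
     {fa_sub (TT (1\<^sub>m n)) fa_one}
   \<union> {fa_sub (fa_mult (TT w1) (TT w2)) (TT (w1 * w2)) | w1 w2. w1 \<in> G \<and> w2 \<in> G}
   \<union> {fa_sub (fa_mult (TT (dist_refl n G H)) (EE H)) (EE H) | H. H \<in> hyps n G}
   \<union> {fa_sub (fa_mult (EE H) (TT (dist_refl n G H))) (EE H) | H. H \<in> hyps n G}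
   \<union> {fa_sub (fa_mult (TT w) (EE H)) (EE H) | w H. w \<in> G \<and> H \<in> hyps n G \<and> img w H = H \<and>
         noncrossing_edge n G (H \<inter> fix_space n w)}
   \<union> {fa_sub (fa_mult (EE H) (TT w)) (EE H) | w H. w \<in> G \<and> H \<in> hyps n G \<and> img w H = H \<and>
         noncrossing_edge n G (H \<inter> fix_space n w)}
   \<union> {fa_sub (fa_mult (EE H) (EE H)) (fa_smult (tau H) (EE H)) | H. H \<in> hyps n G}
   \<union> {fa_sub (fa_mult (TT w) (EE K)) (fa_mult (EE H) (TT w)) | w H K.
         w \<in> G \<and> H \<in> hyps n G \<and> K \<in> hyps n G \<and> img w K = H}
   \<union> {fa_sub (fa_mult (EE H) (EE K)) (fa_mult (EE K) (EE H)) | H K.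
         H \<in> hyps n G \<and> K \<in> hyps n G \<and> transversal n G H K}
   \<union> {fa_sub (fa_mult (EE H) (EE K))
         (fa_mult (fa_lincomb mu TT (R_between n G H K)) (EE K)) | H K.
         H \<in> hyps n G \<and> K \<in> hyps n G \<and> H \<noteq> K \<and> noncrossing_edge n G (H \<inter> K) \<and>
         R_between n G H K \<noteq> {}}
   \<union> {fa_sub (fa_mult (EE H) (EE K))
         (fa_mult (EE H) (fa_lincomb mu TT (R_between n G H K))) | H K.
         H \<in> hyps n G \<and> K \<in> hyps n G \<and> H \<noteq> K \<and> noncrossing_edge n G (H \<inter> K) \<and>
         R_between n G H K \<noteq> {}}
   \<union> {fa_mult (EE H) (EE K) | H K.
         H \<in> hyps n G \<and> K \<in> hyps n G \<and> H \<noteq> K \<and> noncrossing_edge n G (H \<inter> K) \<and>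
         R_between n G H K = {}}"

definition B_ideal :: "nat \<Rightarrow> complex mat set \<Rightarrow> (complex mat \<Rightarrow> complex) \<Rightarrow> (complex vec set \<Rightarrow> complex)
    \<Rightarrow> (bgen list \<Rightarrow> complex) set" where
  "B_ideal n G mu tau = fa_ideal (B_gens n G) (B_rels n G mu tau)"

end

theory Submission
  imports Defs "Jordan_Normal_Form.Matrix_Kernel"
begin

(* Modulo the ideal every word is a linear combination of "normal
   words" e_{H_1} ... e_{H_k} T_w with k at most the number of reflecting hyperplanes.
   A letter T_g is pushed to the right through the e's by relation (3) and merged with the
   final T_w by (0).  A word in the e's that is longer than the number of hyperplanes repeats
   some H; the first later hyperplane K that is equal to H or not transversal to H is moved
   next to H by (4), and then (2), (5) or (6) shortens the word.  That (5)/(6) apply needs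
   the geometric fact that two distinct non-transversal reflecting hyperplanes meet in a
   noncrossing codimension-2 edge, which rests on the linear algebra of hyperplanes in C^n
   and on the fact that G permutes its reflecting hyperplanes.

   Letting T_g act on the group elements by left multiplication and every e_H
   act by zero defines a representation of the free algebra which kills all relations, hence
   the whole ideal; evaluating at the identity matrix recovers the coefficients of a linear
   combination of the T_w. *)

section \<open>Hyperplanes in K^n\<close>

definition hplane :: "nat \<Rightarrow> 'a :: field vec \<Rightarrow> 'a vec set" where
  "hplane n a = {v \<in> carrier_vec n. a \<bullet> v = 0}"

lemma nonzero_vec_component:
  assumes "c \<in> carrier_vec n" "c \<noteq> 0\<^sub>v n"
  shows "\<exists>j<n. c $ j \<noteq> 0"
  using assms by (metis carrier_vecD eq_vecI index_zero_vec(1,2))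

lemma hplane_subset_proportional:
  assumes a: "a \<in> carrier_vec n" and c: "c \<in> carrier_vec n" and c0: "c \<noteq> 0\<^sub>v n"
    and incl: "hplane n c \<subseteq> hplane n a"
  shows "\<exists>l. \<forall>v\<in>carrier_vec n. a \<bullet> v = l * (c \<bullet> v)"
proof -
  obtain j where j: "j < n" "c $ j \<noteq> 0" using nonzero_vec_component[OF c c0] by blast
  define u :: "'a vec" where "u = unit_vec n j"
  have u: "u \<in> carrier_vec n" and cu: "c \<bullet> u = c $ j" and au: "a \<bullet> u = a $ j"
    unfolding u_def using a c j by auto
  show ?thesis
  proof (intro exI ballI)
    fix v :: "'a vec" assume v: "v \<in> carrier_vec n"
    define w where "w = v - ((c \<bullet> v) / c $ j) \<cdot>\<^sub>v u"
    have w: "w \<in> carrier_vec n" unfolding w_def using v u by simp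
    have "c \<bullet> w = c \<bullet> v - ((c \<bullet> v) / c $ j) * (c \<bullet> u)"
      unfolding w_def using v u c by (simp add: scalar_prod_minus_distrib[of c n])
    also have "\<dots> = 0" using cu j by simp
    finally have "a \<bullet> w = 0" using incl w unfolding hplane_def by blast
    moreover have "a \<bullet> w = a \<bullet> v - ((c \<bullet> v) / c $ j) * (a \<bullet> u)"
      unfolding w_def using v u a by (simp add: scalar_prod_minus_distrib[of a n])
    ultimately show "a \<bullet> v = (a $ j / c $ j) * (c \<bullet> v)" using au by simp
  qed
qed

lemma hplane_subset_eq:
  assumes a: "a \<in> carrier_vec n" "a \<noteq> 0\<^sub>v n" and c: "c \<in> carrier_vec n" "c \<noteq> 0\<^sub>v n"
    and incl: "hplane n c \<subseteq> hplane n a"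
  shows "hplane n c = hplane n a"
proof -
  obtain l where l: "\<forall>v\<in>carrier_vec n. a \<bullet> v = l * (c \<bullet> v)"
    using hplane_subset_proportional[OF a(1) c incl] by blast
  obtain j where j: "j < n" "a $ j \<noteq> 0" using nonzero_vec_component[OF a] by blast
  have "a \<bullet> unit_vec n j = l * (c \<bullet> unit_vec n j)" using l j unit_vec_carrier by blast
  hence "l \<noteq> 0" using j a by auto
  thus ?thesis using l unfolding hplane_def by auto
qed

lemma hplane_not_in_hplane_inter:
  assumes a: "a \<in> carrier_vec n" "a \<noteq> 0\<^sub>v n" and b: "b \<in> carrier_vec n" "b \<noteq> 0\<^sub>v n"
    and ne: "hplane n a \<noteq> hplane n b" and c: "c \<in> carrier_vec n"
  shows "\<not> hplane n c \<subseteq> hplane n a \<inter> hplane n b"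
proof
  assume incl: "hplane n c \<subseteq> hplane n a \<inter> hplane n b"
  show False
  proof (cases "c = 0\<^sub>v n")
    case True
    obtain j where j: "j < n" "a $ j \<noteq> 0" using nonzero_vec_component[OF a] by blast
    have "unit_vec n j \<in> hplane n c" using True j unfolding hplane_def by simp
    hence "a \<bullet> unit_vec n j = 0" using incl unfolding hplane_def by blast
    thus False using j a by simp
  next
    case False
    have "hplane n c = hplane n a" by (rule hplane_subset_eq[OF a c False]) (use incl in blast)
    moreover have "hplane n c = hplane n b" by (rule hplane_subset_eq[OF b c False]) (use incl in blast)
    ultimately show False using ne by simp
  qed
qed

lemma mat_kernel_two_rows:
  assumes C: "C \<in> carrier_mat 2 n"
  shows "mat_kernel C = hplane n (row C 0) \<inter> hplane n (row C 1)"
proof -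
  have "C *\<^sub>v v = 0\<^sub>v 2 \<longleftrightarrow> row C 0 \<bullet> v = 0 \<and> row C 1 \<bullet> v = 0" for v
  proof
    assume "C *\<^sub>v v = 0\<^sub>v 2"
    hence "(C *\<^sub>v v) $ 0 = 0" "(C *\<^sub>v v) $ 1 = 0" by auto
    thus "row C 0 \<bullet> v = 0 \<and> row C 1 \<bullet> v = 0" using C by simp
  next
    assume "row C 0 \<bullet> v = 0 \<and> row C 1 \<bullet> v = 0"
    thus "C *\<^sub>v v = 0\<^sub>v 2" using C by (intro eq_vecI) (auto simp: less_2_cases_iff)
  qed
  thus ?thesis using C unfolding mat_kernel_def hplane_def by auto
qed

lemma distinct_hplanes_dim:
  assumes a: "a \<in> carrier_vec n" "a \<noteq> 0\<^sub>v n" and b: "b \<in> carrier_vec n" "b \<noteq> 0\<^sub>v n"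
    and ne: "hplane n a \<noteq> hplane n b"
  shows "2 \<le> n"
proof (rule ccontr)
  assume "\<not> 2 \<le> n"
  moreover have "n \<noteq> 0"
  proof
    assume "n = 0"
    hence "a = 0\<^sub>v n" using a by (intro eq_vecI) auto
    thus False using a by simp
  qed
  ultimately have n1: "n = 1" by simp
  have "x \<bullet> y = x $ 0 * y $ 0" if "x \<in> carrier_vec n" "y \<in> carrier_vec n" for x y :: "'a vec"
    using n1 that unfolding scalar_prod_def by simp
  hence "hplane n (unit_vec n 0) \<subseteq> hplane n a \<inter> hplane n b"
    using a b n1 unfolding hplane_def by auto
  thus False using hplane_not_in_hplane_inter[OF a b ne, of "unit_vec n 0"] by simp
qed

text \<open>Two distinct complex hyperplanes intersect in a subspace of codimension 2. The
  dimension is computed by Gauss-Jordan elimination of the 2 x n matrix of the two normal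
  vectors: its reduced form has two nonzero rows.\<close>
lemma codim_hplane_inter:
  fixes a b :: "complex vec"
  assumes a: "a \<in> carrier_vec n" "a \<noteq> 0\<^sub>v n" and b: "b \<in> carrier_vec n" "b \<noteq> 0\<^sub>v n"
    and ne: "hplane n a \<noteq> hplane n b"
  shows "n - sub_dim n (hplane n a \<inter> hplane n b) = 2"
proof -
  note not_in = hplane_not_in_hplane_inter[OF a b ne]
  define M where "M = mat_of_rows n [a, b]"
  have M: "M \<in> carrier_mat 2 n" unfolding M_def using mat_of_rows_carrier(1)[of n "[a, b]"] by (simp add: numeral_2_eq_2)
  have "row M 0 = a" "row M 1 = b" unfolding M_def using a b by (auto intro!: mat_of_rows_row)
  hence kM: "mat_kernel M = hplane n a \<inter> hplane n b" using mat_kernel_two_rows[OF M] by simp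
  obtain C where gj: "gauss_jordan_single M = C" by simp
  note GJ = gauss_jordan_single[OF M gj]
  have C: "C \<in> carrier_mat 2 n" using GJ by simp
  have kC: "mat_kernel C = hplane n a \<inter> hplane n b"
    using GJ(1) M C kM unfolding mat_kernel_def by auto
  have rows: "row C i \<in> carrier_vec n" for i using C by auto
  have kC2: "mat_kernel C = hplane n (row C 0) \<inter> hplane n (row C 1)" by (rule mat_kernel_two_rows[OF C])
  have zero: "hplane n (0\<^sub>v n) = carrier_vec n" unfolding hplane_def by auto
  have "row C 0 \<noteq> 0\<^sub>v n"
  proof
    assume row: "row C 0 = 0\<^sub>v n"
    have "hplane n (row C 1) = mat_kernel C" unfolding kC2 row zero by (auto simp: hplane_def)
    thus False using not_in[OF rows[of 1]] kC by simp
  qed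
  moreover have "row C 1 \<noteq> 0\<^sub>v n"
  proof
    assume row: "row C 1 = 0\<^sub>v n"
    have "hplane n (row C 0) = mat_kernel C" unfolding kC2 row zero by (auto simp: hplane_def)
    thus False using not_in[OF rows[of 0]] kC by simp
  qed
  ultimately have "{i. i < 2 \<and> row C i \<noteq> 0\<^sub>v n} = {0, 1}" by (auto simp: less_2_cases_iff)
  hence card: "card {i. i < 2 \<and> row C i \<noteq> 0\<^sub>v n} = 2" by simp
  interpret K: kernel 2 n C by (unfold_locales, rule C)
  have "K.dim = n - 2" using find_base_vectors(6)[OF GJ(3) C] card by simp
  moreover have "K.dim = sub_dim n (hplane n a \<inter> hplane n b)" unfolding sub_dim_def kC ..
  moreover have "2 \<le> n" by (rule distinct_hplanes_dim[OF a b ne])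
  ultimately show ?thesis by simp
qed

section \<open>Pseudo reflections and their fixed hyperplanes\<close>

lemma diag_pr_mult_vec:
  assumes "u \<in> carrier_vec n" "0 < n"
  shows "diag_pr n xi *\<^sub>v u = vec n (\<lambda>i. if i = 0 then xi * u $ 0 else u $ i)"
proof (rule eq_vecI)
  fix i assume "i < dim_vec (vec n (\<lambda>i. if i = 0 then xi * u $ 0 else u $ i))"
  hence i: "i < n" by simp
  have "(diag_pr n xi *\<^sub>v u) $ i = (\<Sum>j<n. (if i = j then (if i = 0 then xi else 1) else 0) * u $ j)"
    using i assms unfolding diag_pr_def
    by (simp add: mult_mat_vec_def scalar_prod_def lessThan_atLeast0 del: One_nat_def)
  also have "\<dots> = (if i = 0 then xi else 1) * u $ i"
    using i by (simp add: if_distrib[of "\<lambda>x. x * _"] cong: if_cong)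
  finally show "(diag_pr n xi *\<^sub>v u) $ i = vec n (\<lambda>i. if i = 0 then xi * u $ 0 else u $ i) $ i"
    using i by simp
qed (use assms in \<open>auto simp: diag_pr_def\<close>)

lemma diag_pr_fixes:
  assumes "u \<in> carrier_vec n" "0 < n"
  shows "diag_pr n xi *\<^sub>v u = u \<longleftrightarrow> xi * u $ 0 = u $ 0"
proof
  assume "diag_pr n xi *\<^sub>v u = u"
  hence "(diag_pr n xi *\<^sub>v u) $ 0 = u $ 0" by simp
  thus "xi * u $ 0 = u $ 0" unfolding diag_pr_mult_vec[OF assms] using assms(2) by simp
next
  assume "xi * u $ 0 = u $ 0"
  thus "diag_pr n xi *\<^sub>v u = u" unfolding diag_pr_mult_vec[OF assms] using assms(1) by (intro eq_vecI) auto
qed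

text \<open>The fixed space of a pseudo reflection s = P diag(xi,1,...,1) Q is the hyperplane
  cut out by the first row of Q = P^-1.\<close>
lemma fix_space_pseudo_reflection:
  assumes "pseudo_reflection n s"
  shows "\<exists>a\<in>carrier_vec n. a \<noteq> 0\<^sub>v n \<and> fix_space n s = hplane n a"
proof -
  from assms obtain P Q xi where n: "0 < n" and s: "s \<in> carrier_mat n n"
    and P: "P \<in> carrier_mat n n" and Q: "Q \<in> carrier_mat n n"
    and PQ: "P * Q = 1\<^sub>m n" and QP: "Q * P = 1\<^sub>m n"
    and xi: "xi \<noteq> 1" and D: "Q * s * P = diag_pr n xi"
    unfolding pseudo_reflection_def by blast
  define a where "a = row Q 0"
  have a: "a \<in> carrier_vec n" using Q n unfolding a_def by auto
  have "a \<bullet> col P 0 = (Q * P) $$ (0,0)" using Q P n unfolding a_def by simp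
  hence "a \<bullet> col P 0 = 1" using QP n by simp
  hence a0: "a \<noteq> 0\<^sub>v n" using P n by auto
  have Dc: "diag_pr n xi \<in> carrier_mat n n" unfolding diag_pr_def by simp
  have "diag_pr n xi * Q = (Q * s * P) * Q" using D by simp
  also have "\<dots> = Q * s * (P * Q)" using P Q s by (simp add: assoc_mult_mat[of _ n n _ n _ n])
  also have "\<dots> = Q * s" using PQ Q s by simp
  finally have Qs: "Q * s = diag_pr n xi * Q" by simp
  have Q_inj: "x = y" if "x \<in> carrier_vec n" "y \<in> carrier_vec n" "Q *\<^sub>v x = Q *\<^sub>v y" for x y
  proof -
    have "x = P *\<^sub>v (Q *\<^sub>v x)" "y = P *\<^sub>v (Q *\<^sub>v y)"
      using assoc_mult_mat_vec[OF P Q that(1)] assoc_mult_mat_vec[OF P Q that(2)] PQ that by simp_all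
    thus ?thesis using that by simp
  qed
  have "s *\<^sub>v v = v \<longleftrightarrow> (Q *\<^sub>v v) $ 0 = 0" if v: "v \<in> carrier_vec n" for v
  proof -
    have Qv: "Q *\<^sub>v v \<in> carrier_vec n" using Q v by simp
    have "s *\<^sub>v v = v \<longleftrightarrow> Q *\<^sub>v (s *\<^sub>v v) = Q *\<^sub>v v"
      using Q_inj[of "s *\<^sub>v v" v] s v by auto
    also have "Q *\<^sub>v (s *\<^sub>v v) = diag_pr n xi *\<^sub>v (Q *\<^sub>v v)"
      using Q s v Dc by (simp add: Qs flip: assoc_mult_mat_vec)
    also have "diag_pr n xi *\<^sub>v (Q *\<^sub>v v) = Q *\<^sub>v v \<longleftrightarrow> xi * (Q *\<^sub>v v) $ 0 = (Q *\<^sub>v v) $ 0"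
      by (rule diag_pr_fixes[OF Qv n])
    also have "\<dots> \<longleftrightarrow> (Q *\<^sub>v v) $ 0 = 0" using xi by simp
    finally show ?thesis .
  qed
  moreover have "(Q *\<^sub>v v) $ 0 = a \<bullet> v" for v using Q n unfolding a_def by simp
  ultimately have "fix_space n s = hplane n a" unfolding fix_space_def hplane_def by auto
  thus ?thesis using a a0 by blast
qed

lemma pseudo_reflection_conj:
  assumes s: "pseudo_reflection n s" and g: "g \<in> carrier_mat n n" and h: "h \<in> carrier_mat n n"
    and gh: "g * h = 1\<^sub>m n" and hg: "h * g = 1\<^sub>m n"
  shows "pseudo_reflection n (g * s * h)"
proof -
  from s obtain P Q xi where n: "0 < n" and sc: "s \<in> carrier_mat n n"
    and P: "P \<in> carrier_mat n n" and Q: "Q \<in> carrier_mat n n" and PQ: "P * Q = 1\<^sub>m n" and QP: "Q * P = 1\<^sub>m n"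
    and xi: "xi \<noteq> 1 \<and> (\<exists>k::nat. 0 < k \<and> xi ^ k = 1)" and D: "Q * s * P = diag_pr n xi"
    unfolding pseudo_reflection_def by blast
  have "g * P * (Q * h) = g * (P * Q) * h" "Q * h * (g * P) = Q * (h * g) * P"
    "Q * h * (g * s * h) * (g * P) = Q * (h * g) * s * (h * g) * P"
    using g h P Q sc by (simp_all add: assoc_mult_mat[of _ n n _ n _ n])
  hence inv: "g * P * (Q * h) = 1\<^sub>m n" "Q * h * (g * P) = 1\<^sub>m n"
    and diag: "Q * h * (g * s * h) * (g * P) = diag_pr n xi"
    using PQ QP gh hg D g h Q P sc by simp_all
  have carrier: "g * P \<in> carrier_mat n n" "Q * h \<in> carrier_mat n n" "g * s * h \<in> carrier_mat n n"
    using g h P Q sc by auto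
  show ?thesis unfolding pseudo_reflection_def
    using n carrier(3) inv xi diag by (intro conjI bexI[OF _ carrier(1)] bexI[OF _ carrier(2)]) auto
qed

lemma fix_space_conj:
  assumes s: "s \<in> carrier_mat n n" and g: "g \<in> carrier_mat n n" and h: "h \<in> carrier_mat n n"
    and gh: "g * h = 1\<^sub>m n" and hg: "h * g = 1\<^sub>m n"
  shows "fix_space n (g * s * h) = img g (fix_space n s)"
proof (intro equalityI subsetI)
  fix v assume "v \<in> fix_space n (g * s * h)"
  hence v: "v \<in> carrier_vec n" and fixed: "(g * s * h) *\<^sub>v v = v" unfolding fix_space_def by auto
  have "s *\<^sub>v (h *\<^sub>v v) = (h * g) *\<^sub>v (s *\<^sub>v (h *\<^sub>v v))" using hg s h v by simp
  also have "\<dots> = h *\<^sub>v ((g * s * h) *\<^sub>v v)"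
    using g h s v by (simp add: assoc_mult_mat_vec[of _ n n _ n])
  finally have "h *\<^sub>v v \<in> fix_space n s" using fixed h v unfolding fix_space_def by simp
  moreover have "v = g *\<^sub>v (h *\<^sub>v v)" using g h v gh by (simp flip: assoc_mult_mat_vec)
  ultimately show "v \<in> img g (fix_space n s)" unfolding img_def by blast
next
  fix v assume "v \<in> img g (fix_space n s)"
  then obtain u where u: "u \<in> carrier_vec n" "s *\<^sub>v u = u" and vu: "v = g *\<^sub>v u"
    unfolding img_def fix_space_def by auto
  have "(g * s * h) *\<^sub>v v = g *\<^sub>v (s *\<^sub>v ((h * g) *\<^sub>v u))"
    unfolding vu using g h s u by (simp add: assoc_mult_mat_vec[of _ n n _ n])
  also have "\<dots> = v" using hg u vu by simp
  finally show "v \<in> fix_space n (g * s * h)" unfolding fix_space_def vu using g u by simp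
qed

section \<open>The reflecting hyperplanes of G\<close>

context
  fixes n :: nat and G :: "complex mat set"
  assumes fprg: "finite_pseudo_reflection_group n G"
begin

lemma G_carrier: "g \<in> G \<Longrightarrow> g \<in> carrier_mat n n"
  and G_one: "1\<^sub>m n \<in> G"
  and G_mult: "g \<in> G \<Longrightarrow> h \<in> G \<Longrightarrow> g * h \<in> G"
  and G_finite: "finite G"
  using fprg unfolding finite_pseudo_reflection_group_def by auto

lemma G_inv:
  assumes g: "g \<in> G"
  shows "\<exists>h\<in>G. g * h = 1\<^sub>m n \<and> h * g = 1\<^sub>m n"
proof -
  obtain h where h: "h \<in> G" "g * h = 1\<^sub>m n"
    using fprg g unfolding finite_pseudo_reflection_group_def by blast
  moreover have "h * g = 1\<^sub>m n"
    by (rule mat_mult_left_right_inverse[OF G_carrier[OF g] G_carrier[OF h(1)] h(2)])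
  ultimately show ?thesis by blast
qed

lemma hyps_finite: "finite (hyps n G)"
  unfolding hyps_def refls_def using G_finite by simp

lemma hyps_hplane: "H \<in> hyps n G \<Longrightarrow> \<exists>a\<in>carrier_vec n. a \<noteq> 0\<^sub>v n \<and> H = hplane n a"
  unfolding hyps_def refls_def using fix_space_pseudo_reflection by auto

text \<open>G permutes its reflecting hyperplanes: g(Fix s) = Fix(g s g^-1).\<close>
lemma img_hyps:
  assumes g: "g \<in> G" and H: "H \<in> hyps n G"
  shows "img g H \<in> hyps n G"
proof -
  obtain s where s: "s \<in> G" "pseudo_reflection n s" and Hs: "H = fix_space n s"
    using H unfolding hyps_def refls_def by auto
  obtain h where h: "h \<in> G" "g * h = 1\<^sub>m n" "h * g = 1\<^sub>m n" using G_inv[OF g] by blast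
  have gc: "g \<in> carrier_mat n n" and hc: "h \<in> carrier_mat n n" and sc: "s \<in> carrier_mat n n"
    using G_carrier g h s by auto
  have "g * s * h \<in> refls n G"
    using G_mult[OF G_mult[OF g s(1)] h(1)] pseudo_reflection_conj[OF s(2) gc hc h(2,3)]
    unfolding refls_def by simp
  moreover have "img g H = fix_space n (g * s * h)"
    unfolding Hs by (rule fix_space_conj[OF sc gc hc h(2,3), symmetric])
  ultimately show ?thesis unfolding hyps_def by (rule rev_image_eqI)
qed

text \<open>Two distinct reflecting hyperplanes are either transversal or meet in a noncrossing
  codimension-2 edge; this is what makes relations (4)-(6) cover every pair.\<close>
lemma not_transversal_noncrossing:
  assumes H: "H \<in> hyps n G" and K: "K \<in> hyps n G" and ne: "H \<noteq> K"
    and nt: "\<not> transversal n G H K"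
  shows "noncrossing_edge n G (H \<inter> K)"
proof -
  obtain a b where a: "a \<in> carrier_vec n" "a \<noteq> 0\<^sub>v n" and Ha: "H = hplane n a"
    and b: "b \<in> carrier_vec n" "b \<noteq> 0\<^sub>v n" and Kb: "K = hplane n b"
    using hyps_hplane[OF H] hyps_hplane[OF K] by blast
  have "n - sub_dim n (H \<inter> K) = 2"
    unfolding Ha Kb by (rule codim_hplane_inter[OF a b]) (use ne Ha Kb in simp)
  moreover have "is_edge n G (H \<inter> K)"
    unfolding is_edge_def using H K by (intro exI[of _ "{H, K}"]) auto
  ultimately have codim2: "codim2_edge n G (H \<inter> K)" unfolding codim2_edge_def by simp
  have "\<not> crossing_edge n G (H \<inter> K)"
  proof
    assume "crossing_edge n G (H \<inter> K)"
    then obtain H' K' where tr: "transversal n G H' K'" and eq: "H \<inter> K = H' \<inter> K'"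
      unfolding crossing_edge_def by blast
    hence over: "{M \<in> hyps n G. H \<inter> K \<subseteq> M} = {H', K'}" and ne': "H' \<noteq> K'"
      unfolding transversal_def by auto
    have "H \<in> {H', K'}" "K \<in> {H', K'}" using over H K by blast+
    hence "{H, K} = {H', K'}" using ne ne' by auto
    hence "transversal n G H K" unfolding transversal_def using ne over by simp
    thus False using nt by simp
  qed
  thus ?thesis using codim2 unfolding noncrossing_edge_def by simp
qed

end

section \<open>The free algebra: words, congruence and span modulo an ideal\<close>

definition fa_word :: "'g list \<Rightarrow> 'g list \<Rightarrow> complex" where
  "fa_word u = (\<lambda>w. if w = u then 1 else 0)"

lemma fa_gen_word: "fa_gen x = fa_word [x]"
  unfolding fa_gen_def fa_word_def ..

lemma fa_one_word: "fa_one = fa_word []"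
  unfolding fa_one_def fa_word_def ..

lemma fa_word_FA: "set u \<subseteq> Gens \<Longrightarrow> fa_word u \<in> FA Gens"
  unfolding FA_def fa_word_def by auto

lemma fa_mult_word: "fa_mult (fa_word u) (fa_word v) = fa_word (u @ v)"
proof
  fix w :: "'a list"
  have split: "take k w = u \<and> drop k w = v \<longleftrightarrow> k = length u \<and> w = u @ v" if "k \<le> length w" for k
    using that by (metis append_eq_conv_conj append_take_drop_id length_take min.absorb2)
  have "fa_mult (fa_word u) (fa_word v) w = (\<Sum>k\<le>length w. if k = length u \<and> w = u @ v then 1 else 0)"
    unfolding fa_mult_def fa_word_def using split by (intro sum.cong) auto
  also have "\<dots> = fa_word (u @ v) w" unfolding fa_word_def by (auto simp: sum.delta)
  finally show "fa_mult (fa_word u) (fa_word v) w = fa_word (u @ v) w" .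
qed

lemma FA_word_expansion: "f \<in> FA Gens \<Longrightarrow> f = fa_lincomb f fa_word {w. f w \<noteq> 0}"
proof
  fix w assume "f \<in> FA Gens"
  hence fin: "finite {w. f w \<noteq> 0}" unfolding FA_def by auto
  have "fa_lincomb f fa_word {w. f w \<noteq> 0} w = (\<Sum>u\<in>{w. f w \<noteq> 0}. if w = u then f u else 0)"
    unfolding fa_lincomb_def fa_word_def by (auto intro: sum.cong)
  also have "\<dots> = f w" using fin by (simp add: sum.delta)
  finally show "f w = fa_lincomb f fa_word {w. f w \<noteq> 0} w" by simp
qed

lemma fa_mult_sub_right: "fa_mult a (fa_sub f g) = fa_sub (fa_mult a f) (fa_mult a g)"
  and fa_mult_sub_left: "fa_mult (fa_sub f g) a = fa_sub (fa_mult f a) (fa_mult g a)"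
  and fa_mult_smult_right: "fa_mult a (fa_smult c f) = fa_smult c (fa_mult a f)"
  and fa_mult_smult_left: "fa_mult (fa_smult c f) a = fa_smult c (fa_mult f a)"
  unfolding fa_mult_def fa_sub_def fa_smult_def
  by (auto simp: algebra_simps sum_subtractf sum_distrib_left)

lemma fa_mult_lincomb_right: "fa_mult a (fa_lincomb c b R) = fa_lincomb c (\<lambda>s. fa_mult a (b s)) R"
  and fa_mult_lincomb_left: "fa_mult (fa_lincomb c b R) a = fa_lincomb c (\<lambda>s. fa_mult (b s) a) R"
  unfolding fa_mult_def fa_lincomb_def
  by (auto simp: sum_distrib_left sum_distrib_right ac_simps intro!: ext sum.swap[THEN trans] sum.cong)

lemma fa_mult_zero_right [simp]: "fa_mult a (\<lambda>w. 0) = (\<lambda>w. 0)"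
  and fa_mult_zero_left [simp]: "fa_mult (\<lambda>w. 0) a = (\<lambda>w. 0)"
  unfolding fa_mult_def by simp_all

lemma fa_lincomb_insert:
  "finite R \<Longrightarrow> x \<notin> R \<Longrightarrow> fa_lincomb c b (insert x R) = fa_add (fa_smult (c x) (b x)) (fa_lincomb c b R)"
  unfolding fa_lincomb_def fa_add_def fa_smult_def by auto

lemma fa_lincomb_empty: "fa_lincomb c b {} = (\<lambda>w. 0)"
  unfolding fa_lincomb_def by simp

definition cong_mod :: "'g set \<Rightarrow> ('g list \<Rightarrow> complex) set \<Rightarrow> ('g list \<Rightarrow> complex) \<Rightarrow> ('g list \<Rightarrow> complex) \<Rightarrow> bool" where
  "cong_mod Gens Rel f g \<longleftrightarrow> fa_sub f g \<in> fa_ideal Gens Rel"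

lemma cong_mod_rel: "fa_sub f g \<in> Rel \<Longrightarrow> cong_mod Gens Rel f g"
  unfolding cong_mod_def by (rule fa_ideal.base)

lemma cong_mod_refl: "cong_mod Gens Rel f f"
  using fa_ideal.zero unfolding cong_mod_def fa_sub_def by simp

lemma cong_mod_smult:
  assumes "cong_mod Gens Rel f g"
  shows "cong_mod Gens Rel (fa_smult c f) (fa_smult c g)"
proof -
  have "fa_smult c (fa_sub f g) \<in> fa_ideal Gens Rel" using assms unfolding cong_mod_def by (rule fa_ideal.smult)
  moreover have "fa_smult c (fa_sub f g) = fa_sub (fa_smult c f) (fa_smult c g)"
    unfolding fa_smult_def fa_sub_def by (auto simp: algebra_simps)
  ultimately show ?thesis unfolding cong_mod_def by simp
qed

lemma cong_mod_sym:
  assumes "cong_mod Gens Rel f g"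
  shows "cong_mod Gens Rel g f"
proof -
  have "fa_smult (-1) (fa_sub f g) \<in> fa_ideal Gens Rel" using assms unfolding cong_mod_def by (rule fa_ideal.smult)
  moreover have "fa_smult (-1) (fa_sub f g) = fa_sub g f" unfolding fa_smult_def fa_sub_def by auto
  ultimately show ?thesis unfolding cong_mod_def by simp
qed

lemma cong_mod_add:
  assumes "cong_mod Gens Rel f1 g1" "cong_mod Gens Rel f2 g2"
  shows "cong_mod Gens Rel (fa_add f1 f2) (fa_add g1 g2)"
proof -
  have "fa_add (fa_sub f1 g1) (fa_sub f2 g2) \<in> fa_ideal Gens Rel"
    using assms unfolding cong_mod_def by (rule fa_ideal.add)
  moreover have "fa_add (fa_sub f1 g1) (fa_sub f2 g2) = fa_sub (fa_add f1 f2) (fa_add g1 g2)"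
    unfolding fa_add_def fa_sub_def by auto
  ultimately show ?thesis unfolding cong_mod_def by simp
qed

lemma cong_mod_trans:
  assumes "cong_mod Gens Rel f g" "cong_mod Gens Rel g h"
  shows "cong_mod Gens Rel f h"
proof -
  have "fa_add (fa_sub f g) (fa_sub g h) \<in> fa_ideal Gens Rel"
    using assms unfolding cong_mod_def by (rule fa_ideal.add)
  moreover have "fa_add (fa_sub f g) (fa_sub g h) = fa_sub f h" unfolding fa_add_def fa_sub_def by auto
  ultimately show ?thesis unfolding cong_mod_def by simp
qed

lemma cong_mod_lmult: "a \<in> FA Gens \<Longrightarrow> cong_mod Gens Rel f g \<Longrightarrow> cong_mod Gens Rel (fa_mult a f) (fa_mult a g)"
  unfolding cong_mod_def fa_mult_sub_right[symmetric] by (rule fa_ideal.lmult)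

lemma cong_mod_rmult: "a \<in> FA Gens \<Longrightarrow> cong_mod Gens Rel f g \<Longrightarrow> cong_mod Gens Rel (fa_mult f a) (fa_mult g a)"
  unfolding cong_mod_def fa_mult_sub_left[symmetric] by (rule fa_ideal.rmult)

lemma cong_mod_in_word:
  assumes "set pre \<subseteq> Gens" "set suf \<subseteq> Gens" "cong_mod Gens Rel (fa_word x) f"
  shows "cong_mod Gens Rel (fa_word (pre @ x @ suf)) (fa_mult (fa_mult (fa_word pre) f) (fa_word suf))"
  using cong_mod_rmult[OF fa_word_FA[OF assms(2)] cong_mod_lmult[OF fa_word_FA[OF assms(1)] assms(3)]]
  by (simp add: fa_mult_word)

lemma cong_mod_in_word_word:
  assumes "set pre \<subseteq> Gens" "set suf \<subseteq> Gens" "cong_mod Gens Rel (fa_word x) (fa_word y)"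
  shows "cong_mod Gens Rel (fa_word (pre @ x @ suf)) (fa_word (pre @ y @ suf))"
  using cong_mod_in_word[OF assms] by (simp add: fa_mult_word)

definition spanned_mod :: "'g set \<Rightarrow> ('g list \<Rightarrow> complex) set \<Rightarrow> ('g list \<Rightarrow> complex) set \<Rightarrow> ('g list \<Rightarrow> complex) \<Rightarrow> bool" where
  "spanned_mod Gens Rel X f \<longleftrightarrow> (\<exists>c. cong_mod Gens Rel f (fa_lincomb c (\<lambda>b. b) X))"

lemma spanned_mod_zero: "spanned_mod Gens Rel X (\<lambda>w. 0)"
proof -
  have "fa_lincomb (\<lambda>x. 0) (\<lambda>b. b) X = (\<lambda>w. 0)" unfolding fa_lincomb_def by simp
  thus ?thesis unfolding spanned_mod_def by (intro exI[of _ "\<lambda>x. 0"]) (simp add: cong_mod_refl)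
qed

lemma spanned_mod_mem: "finite X \<Longrightarrow> x \<in> X \<Longrightarrow> spanned_mod Gens Rel X x"
proof -
  assume X: "finite X" and x: "x \<in> X"
  have "fa_lincomb (\<lambda>y. if y = x then 1 else 0) (\<lambda>b. b) X w = x w" for w
  proof -
    have "fa_lincomb (\<lambda>y. if y = x then 1 else 0) (\<lambda>b. b) X w = (\<Sum>y\<in>X. if y = x then x w else 0)"
      unfolding fa_lincomb_def by (rule sum.cong) auto
    thus ?thesis using X x by simp
  qed
  hence eq: "fa_lincomb (\<lambda>y. if y = x then 1 else 0) (\<lambda>b. b) X = x" by (rule ext)
  show ?thesis unfolding spanned_mod_def
    by (rule exI[of _ "\<lambda>y. if y = x then 1 else 0"]) (simp add: eq cong_mod_refl)
qed

lemma spanned_mod_add: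
  assumes "spanned_mod Gens Rel X f" "spanned_mod Gens Rel X g"
  shows "spanned_mod Gens Rel X (fa_add f g)"
proof -
  obtain c d where "cong_mod Gens Rel f (fa_lincomb c (\<lambda>b. b) X)" "cong_mod Gens Rel g (fa_lincomb d (\<lambda>b. b) X)"
    using assms unfolding spanned_mod_def by blast
  hence "cong_mod Gens Rel (fa_add f g) (fa_add (fa_lincomb c (\<lambda>b. b) X) (fa_lincomb d (\<lambda>b. b) X))"
    by (rule cong_mod_add)
  moreover have "fa_add (fa_lincomb c (\<lambda>b. b) X) (fa_lincomb d (\<lambda>b. b) X) = fa_lincomb (\<lambda>x. c x + d x) (\<lambda>b. b) X"
    unfolding fa_add_def fa_lincomb_def by (auto simp: algebra_simps sum.distrib)
  ultimately show ?thesis unfolding spanned_mod_def by auto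
qed

lemma spanned_mod_smult:
  assumes "spanned_mod Gens Rel X f"
  shows "spanned_mod Gens Rel X (fa_smult a f)"
proof -
  obtain c where "cong_mod Gens Rel f (fa_lincomb c (\<lambda>b. b) X)" using assms unfolding spanned_mod_def by blast
  hence "cong_mod Gens Rel (fa_smult a f) (fa_smult a (fa_lincomb c (\<lambda>b. b) X))" by (rule cong_mod_smult)
  moreover have "fa_smult a (fa_lincomb c (\<lambda>b. b) X) = fa_lincomb (\<lambda>x. a * c x) (\<lambda>b. b) X"
    unfolding fa_smult_def fa_lincomb_def by (auto simp: sum_distrib_left ac_simps)
  ultimately show ?thesis unfolding spanned_mod_def by auto
qed

lemma spanned_mod_cong: "cong_mod Gens Rel f g \<Longrightarrow> spanned_mod Gens Rel X g \<Longrightarrow> spanned_mod Gens Rel X f"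
  unfolding spanned_mod_def using cong_mod_trans by blast

lemma spanned_mod_lincomb:
  assumes "finite R" "\<And>s. s \<in> R \<Longrightarrow> spanned_mod Gens Rel X (b s)"
  shows "spanned_mod Gens Rel X (fa_lincomb c b R)"
  using assms
proof (induction R rule: finite_induct)
  case empty
  then show ?case by (simp add: fa_lincomb_empty spanned_mod_zero)
next
  case (insert x F)
  then show ?case by (simp add: fa_lincomb_insert spanned_mod_add spanned_mod_smult)
qed

lemma spanned_mod_trans:
  assumes X: "finite X" and f: "spanned_mod Gens Rel X f" and XY: "\<And>x. x \<in> X \<Longrightarrow> spanned_mod Gens Rel Y x"
  shows "spanned_mod Gens Rel Y f"
proof -
  obtain c where "cong_mod Gens Rel f (fa_lincomb c (\<lambda>b. b) X)" using f unfolding spanned_mod_def by blast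
  moreover have "spanned_mod Gens Rel Y (fa_lincomb c (\<lambda>b. b) X)" by (rule spanned_mod_lincomb[OF X XY])
  ultimately show ?thesis by (rule spanned_mod_cong)
qed

lemma spanned_mod_lmult:
  assumes a: "a \<in> FA Gens" and X: "finite X" and f: "spanned_mod Gens Rel X f"
    and aX: "\<And>x. x \<in> X \<Longrightarrow> spanned_mod Gens Rel Y (fa_mult a x)"
  shows "spanned_mod Gens Rel Y (fa_mult a f)"
proof -
  obtain c where "cong_mod Gens Rel f (fa_lincomb c (\<lambda>b. b) X)" using f unfolding spanned_mod_def by blast
  hence "cong_mod Gens Rel (fa_mult a f) (fa_mult a (fa_lincomb c (\<lambda>b. b) X))" by (rule cong_mod_lmult[OF a])
  hence "cong_mod Gens Rel (fa_mult a f) (fa_lincomb c (\<lambda>x. fa_mult a x) X)" by (simp add: fa_mult_lincomb_right)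
  thus ?thesis using spanned_mod_lincomb[OF X aX] by (rule spanned_mod_cong)
qed

section \<open>The relations of B_G\<close>

text \<open>Membership of the individual relations; B_rels is a union of twelve families, and each
  proof selects the family explicitly.\<close>

lemma B_rels_T_one: "fa_sub (TT (1\<^sub>m n)) fa_one \<in> B_rels n G mu tau"
  unfolding B_rels_def
  by (rule UnI1, rule UnI1, rule UnI1, rule UnI1, rule UnI1, rule UnI1,
      rule UnI1, rule UnI1, rule UnI1, rule UnI1, rule UnI1) simp

lemma B_rels_T_mult: "w1 \<in> G \<Longrightarrow> w2 \<in> G \<Longrightarrow> fa_sub (fa_mult (TT w1) (TT w2)) (TT (w1 * w2)) \<in> B_rels n G mu tau"
  unfolding B_rels_def
  by (rule UnI1, rule UnI1, rule UnI1, rule UnI1, rule UnI1, rule UnI1,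
      rule UnI1, rule UnI1, rule UnI1, rule UnI1, rule UnI2) blast

lemma B_rels_E_idem: "H \<in> hyps n G \<Longrightarrow>
    fa_sub (fa_mult (EE H) (EE H)) (fa_smult (tau H) (EE H)) \<in> B_rels n G mu tau"
  unfolding B_rels_def by (rule UnI1, rule UnI1, rule UnI1, rule UnI1, rule UnI1, rule UnI2) blast

lemma B_rels_T_E: "w \<in> G \<Longrightarrow> H \<in> hyps n G \<Longrightarrow> K \<in> hyps n G \<Longrightarrow> img w K = H \<Longrightarrow>
    fa_sub (fa_mult (TT w) (EE K)) (fa_mult (EE H) (TT w)) \<in> B_rels n G mu tau"
  unfolding B_rels_def by (rule UnI1, rule UnI1, rule UnI1, rule UnI1, rule UnI2) blast

lemma B_rels_E_comm: "H \<in> hyps n G \<Longrightarrow> K \<in> hyps n G \<Longrightarrow> transversal n G H K \<Longrightarrow>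
    fa_sub (fa_mult (EE H) (EE K)) (fa_mult (EE K) (EE H)) \<in> B_rels n G mu tau"
  unfolding B_rels_def by (rule UnI1, rule UnI1, rule UnI1, rule UnI2) blast

lemma B_rels_E_noncrossing: "H \<in> hyps n G \<Longrightarrow> K \<in> hyps n G \<Longrightarrow> H \<noteq> K \<Longrightarrow>
    noncrossing_edge n G (H \<inter> K) \<Longrightarrow> R_between n G H K \<noteq> {} \<Longrightarrow>
    fa_sub (fa_mult (EE H) (EE K)) (fa_mult (fa_lincomb mu TT (R_between n G H K)) (EE K))
      \<in> B_rels n G mu tau"
  unfolding B_rels_def by (rule UnI1, rule UnI1, rule UnI2) blast

lemma B_rels_E_vanish: "H \<in> hyps n G \<Longrightarrow> K \<in> hyps n G \<Longrightarrow> H \<noteq> K \<Longrightarrow>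
    noncrossing_edge n G (H \<inter> K) \<Longrightarrow> R_between n G H K = {} \<Longrightarrow>
    fa_mult (EE H) (EE K) \<in> B_rels n G mu tau"
  unfolding B_rels_def by (rule UnI2) blast

context
  fixes n :: nat and G :: "complex mat set" and mu :: "complex mat \<Rightarrow> complex"
    and tau :: "complex vec set \<Rightarrow> complex"
  assumes fprg: "finite_pseudo_reflection_group n G"
begin

abbreviation congB :: "(bgen list \<Rightarrow> complex) \<Rightarrow> (bgen list \<Rightarrow> complex) \<Rightarrow> bool" where
  "congB \<equiv> cong_mod (B_gens n G) (B_rels n G mu tau)"

lemma Tg_gen: "g \<in> G \<Longrightarrow> Tg g \<in> B_gens n G"
  and Eg_gen: "H \<in> hyps n G \<Longrightarrow> Eg H \<in> B_gens n G"
  and Eg_gens: "set hs \<subseteq> hyps n G \<Longrightarrow> set (map Eg hs) \<subseteq> B_gens n G"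
  unfolding B_gens_def by auto

lemma img_hyps_list: "g \<in> G \<Longrightarrow> set hs \<subseteq> hyps n G \<Longrightarrow> set (map (img g) hs) \<subseteq> hyps n G"
  using img_hyps[OF fprg] by auto

lemma R_between_finite: "finite (R_between n G H K)"
  using G_finite[OF fprg] unfolding R_between_def refls_def by simp

lemma rel_T_one: "congB (fa_word [Tg (1\<^sub>m n)]) (fa_word [])"
  using cong_mod_rel[OF B_rels_T_one] by (simp add: fa_gen_word fa_one_word)

lemma rel_T_mult: "g \<in> G \<Longrightarrow> h \<in> G \<Longrightarrow> congB (fa_word [Tg g, Tg h]) (fa_word [Tg (g * h)])"
  using cong_mod_rel[OF B_rels_T_mult] by (simp add: fa_gen_word fa_mult_word)

lemma rel_E_idem: "H \<in> hyps n G \<Longrightarrow> congB (fa_word [Eg H, Eg H]) (fa_smult (tau H) (fa_word [Eg H]))"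
  using cong_mod_rel[OF B_rels_E_idem] by (simp add: fa_gen_word fa_mult_word)

lemma rel_T_E: "g \<in> G \<Longrightarrow> K \<in> hyps n G \<Longrightarrow> congB (fa_word [Tg g, Eg K]) (fa_word [Eg (img g K), Tg g])"
  using cong_mod_rel[OF B_rels_T_E[OF _ img_hyps[OF fprg] _ refl]] by (simp add: fa_gen_word fa_mult_word)

lemma rel_E_comm: "H \<in> hyps n G \<Longrightarrow> K \<in> hyps n G \<Longrightarrow> transversal n G H K \<Longrightarrow>
    congB (fa_word [Eg H, Eg K]) (fa_word [Eg K, Eg H])"
  using cong_mod_rel[OF B_rels_E_comm] by (simp add: fa_gen_word fa_mult_word)

lemma rel_E_noncrossing: "H \<in> hyps n G \<Longrightarrow> K \<in> hyps n G \<Longrightarrow> H \<noteq> K \<Longrightarrow> noncrossing_edge n G (H \<inter> K) \<Longrightarrow>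
    R_between n G H K \<noteq> {} \<Longrightarrow>
    congB (fa_word [Eg H, Eg K]) (fa_lincomb mu (\<lambda>s. fa_word [Tg s, Eg K]) (R_between n G H K))"
  using cong_mod_rel[OF B_rels_E_noncrossing] by (simp add: fa_gen_word fa_mult_word fa_mult_lincomb_left)

lemma rel_E_vanish:
  assumes "H \<in> hyps n G" "K \<in> hyps n G" "H \<noteq> K" "noncrossing_edge n G (H \<inter> K)" "R_between n G H K = {}"
  shows "congB (fa_word [Eg H, Eg K]) (\<lambda>w. 0)"
proof (rule cong_mod_rel)
  have "fa_sub (fa_word [Eg H, Eg K]) (\<lambda>w. 0) = fa_mult (EE H) (EE K)"
    unfolding fa_sub_def by (simp add: fa_gen_word fa_mult_word)
  thus "fa_sub (fa_word [Eg H, Eg K]) (\<lambda>w. 0) \<in> B_rels n G mu tau"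
    using B_rels_E_vanish[OF assms] by simp
qed

section \<open>Finite dimensionality: normal words\<close>

definition normal_words :: "nat \<Rightarrow> (bgen list \<Rightarrow> complex) set" where
  "normal_words k = {fa_word (map Eg hs @ [Tg w]) | hs w. set hs \<subseteq> hyps n G \<and> length hs \<le> k \<and> w \<in> G}"

abbreviation spanned_by_normal :: "nat \<Rightarrow> (bgen list \<Rightarrow> complex) \<Rightarrow> bool" where
  "spanned_by_normal k \<equiv> spanned_mod (B_gens n G) (B_rels n G mu tau) (normal_words k)"

lemma normal_words_mem:
  "set hs \<subseteq> hyps n G \<Longrightarrow> length hs \<le> k \<Longrightarrow> w \<in> G \<Longrightarrow> fa_word (map Eg hs @ [Tg w]) \<in> normal_words k"
  unfolding normal_words_def by blast

lemma normal_words_finite: "finite (normal_words k)"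
proof -
  have "normal_words k \<subseteq> (\<lambda>(hs, w). fa_word (map Eg hs @ [Tg w])) ` ({hs. set hs \<subseteq> hyps n G \<and> length hs \<le> k} \<times> G)"
    unfolding normal_words_def by auto
  thus ?thesis
    using finite_lists_length_le[OF hyps_finite[OF fprg]] G_finite[OF fprg] finite_subset by blast
qed

lemma normal_words_FA: "normal_words k \<subseteq> FA (B_gens n G)"
  unfolding normal_words_def using Eg_gen Tg_gen by (force intro!: fa_word_FA)

lemma normal_word_spanned:
  "set hs \<subseteq> hyps n G \<Longrightarrow> length hs \<le> k \<Longrightarrow> w \<in> G \<Longrightarrow> spanned_by_normal k (fa_word (map Eg hs @ [Tg w]))"
  by (rule spanned_mod_mem[OF normal_words_finite normal_words_mem])

lemma push_T_through:
  assumes g: "g \<in> G" and hs: "set hs \<subseteq> hyps n G" and suf: "set suf \<subseteq> B_gens n G"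
  shows "set pre \<subseteq> B_gens n G \<Longrightarrow>
    congB (fa_word (pre @ Tg g # map Eg hs @ suf)) (fa_word (pre @ map Eg (map (img g) hs) @ Tg g # suf))"
  using hs
proof (induction hs arbitrary: pre)
  case Nil
  then show ?case by (simp add: cong_mod_refl)
next
  case (Cons K hs)
  have K: "K \<in> hyps n G" and hs': "set hs \<subseteq> hyps n G" using Cons by auto
  have gK: "Eg (img g K) \<in> B_gens n G" using Eg_gen img_hyps[OF fprg g K] .
  have step: "congB (fa_word (pre @ Tg g # Eg K # map Eg hs @ suf)) (fa_word ((pre @ [Eg (img g K)]) @ Tg g # map Eg hs @ suf))"
    using cong_mod_in_word_word[OF _ _ rel_T_E[OF g K], of pre "map Eg hs @ suf"] Cons.prems Eg_gens[OF hs'] suf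
    by simp
  have rest: "congB (fa_word ((pre @ [Eg (img g K)]) @ Tg g # map Eg hs @ suf))
      (fa_word ((pre @ [Eg (img g K)]) @ map Eg (map (img g) hs) @ Tg g # suf))"
    using Cons.prems gK by (intro Cons.IH hs') auto
  show ?case using cong_mod_trans[OF step rest] by simp
qed

lemma push_T_into_normal:
  assumes g: "g \<in> G" and hs: "set hs \<subseteq> hyps n G" and w: "w \<in> G" and pre: "set pre \<subseteq> B_gens n G"
  shows "congB (fa_word (pre @ Tg g # map Eg hs @ [Tg w])) (fa_word (pre @ map Eg (map (img g) hs) @ [Tg (g * w)]))"
proof -
  have push: "congB (fa_word (pre @ Tg g # map Eg hs @ [Tg w])) (fa_word ((pre @ map Eg (map (img g) hs)) @ [Tg g, Tg w] @ []))"
    using push_T_through[OF g hs _ pre] Tg_gen[OF w] by simp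
  have merge: "congB (fa_word ((pre @ map Eg (map (img g) hs)) @ [Tg g, Tg w] @ []))
      (fa_word ((pre @ map Eg (map (img g) hs)) @ [Tg (g * w)] @ []))"
    using pre Eg_gens[OF img_hyps_list[OF g hs]] by (intro cong_mod_in_word_word[OF _ _ rel_T_mult[OF g w]]) auto
  show ?thesis using cong_mod_trans[OF push merge] by simp
qed

lemma commute_E_through:
  assumes H: "H \<in> hyps n G" and B: "set B \<subseteq> hyps n G" and tr: "\<forall>X\<in>set B. transversal n G H X"
    and suf: "set suf \<subseteq> B_gens n G"
  shows "set pre \<subseteq> B_gens n G \<Longrightarrow>
    congB (fa_word (pre @ Eg H # map Eg B @ suf)) (fa_word (pre @ map Eg B @ Eg H # suf))"
  using B tr
proof (induction B arbitrary: pre)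
  case Nil
  then show ?case by (simp add: cong_mod_refl)
next
  case (Cons X B)
  have X: "X \<in> hyps n G" and B': "set B \<subseteq> hyps n G" and tX: "transversal n G H X"
    and tB: "\<forall>X\<in>set B. transversal n G H X" using Cons.prems by auto
  have step: "congB (fa_word (pre @ Eg H # Eg X # map Eg B @ suf)) (fa_word ((pre @ [Eg X]) @ Eg H # map Eg B @ suf))"
    using cong_mod_in_word_word[OF _ _ rel_E_comm[OF H X tX], of pre "map Eg B @ suf"] Cons.prems(1) Eg_gens[OF B'] suf
    by simp
  have rest: "congB (fa_word ((pre @ [Eg X]) @ Eg H # map Eg B @ suf)) (fa_word ((pre @ [Eg X]) @ map Eg B @ Eg H # suf))"
    using Cons.prems(1) Eg_gen[OF X] by (intro Cons.IH B' tB) auto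
  show ?case using cong_mod_trans[OF step rest] by simp
qed

text \<open>A word in the e's longer than the number of hyperplanes contains a factor
  e_H e_{B_1} ... e_{B_j} e_K in which H is transversal to (and distinct from) every B_i,
  while K = H or K is not transversal to H: take two occurrences of a repeated hyperplane H
  and let K be the first hyperplane after H violating transversality.\<close>
lemma long_word_pattern:
  assumes hs: "set hs \<subseteq> hyps n G" and len: "card (hyps n G) < length hs"
  shows "\<exists>A H B K C. hs = A @ H # B @ K # C \<and> (\<forall>X\<in>set B. X \<noteq> H \<and> transversal n G H X)
            \<and> (H = K \<or> \<not> transversal n G H K)"
proof -
  have "\<not> distinct hs"
    using distinct_card[of hs] card_mono[OF hyps_finite[OF fprg] hs] len by auto
  then obtain xs H ys zs where hs_eq: "hs = xs @ [H] @ ys @ [H] @ zs" using not_distinct_decomp by blast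
  let ?bad = "\<lambda>X. X = H \<or> \<not> transversal n G H X"
  have "\<exists>B K D. ys @ H # zs = B @ K # D \<and> (\<forall>X\<in>set B. \<not> ?bad X) \<and> ?bad K"
    using split_list_first_prop[of "ys @ H # zs" ?bad] by auto
  then obtain B K D where "ys @ H # zs = B @ K # D" "\<forall>X\<in>set B. \<not> ?bad X" "?bad K" by blast
  hence "hs = xs @ H # B @ K # D \<and> (\<forall>X\<in>set B. X \<noteq> H \<and> transversal n G H X) \<and> ?bad K"
    using hs_eq by simp
  thus ?thesis by blast
qed

text \<open>Relation (5): e_H e_K = (sum of mu_s T_s over s in R(H,K)) e_K, and each T_s is pushed
  to the end, leaving a word with one e fewer.\<close>
lemma reduce_via_reflections:
  assumes E: "set E \<subseteq> hyps n G" and H: "H \<in> hyps n G" and K: "K \<in> hyps n G" and C: "set C \<subseteq> hyps n G"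
    and w: "w \<in> G" and refls: "H \<noteq> K" "noncrossing_edge n G (H \<inter> K)" "R_between n G H K \<noteq> {}"
  shows "spanned_by_normal (length E + length C + 1) (fa_word (map Eg E @ [Eg H, Eg K] @ map Eg C @ [Tg w]))"
    (is "spanned_by_normal ?k (fa_word (?pre @ _ @ ?suf))")
proof -
  have pre: "set ?pre \<subseteq> B_gens n G" and suf: "set ?suf \<subseteq> B_gens n G"
    using Eg_gens[OF E] Eg_gens[OF C] Tg_gen[OF w] by auto
  let ?R = "R_between n G H K"
  have RG: "?R \<subseteq> G" unfolding R_between_def refls_def by auto
  have "congB (fa_word (?pre @ [Eg H, Eg K] @ ?suf))
      (fa_lincomb mu (\<lambda>s. fa_word (?pre @ Tg s # map Eg (K # C) @ [Tg w])) ?R)"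
    using cong_mod_in_word[OF pre suf rel_E_noncrossing[OF H K refls]]
    by (simp add: fa_mult_lincomb_right fa_mult_lincomb_left fa_mult_word)
  moreover have "spanned_by_normal ?k (fa_lincomb mu (\<lambda>s. fa_word (?pre @ Tg s # map Eg (K # C) @ [Tg w])) ?R)"
  proof (rule spanned_mod_lincomb)
    show "finite ?R" by (rule R_between_finite)
  next
    fix s assume "s \<in> ?R"
    hence s: "s \<in> G" using RG by auto
    have KC: "set (K # C) \<subseteq> hyps n G" using K C by auto
    have "spanned_by_normal ?k (fa_word (?pre @ map Eg (map (img s) (K # C)) @ [Tg (s * w)]))"
      using normal_word_spanned[of "E @ map (img s) (K # C)" ?k "s * w"]
        E img_hyps_list[OF s KC] G_mult[OF fprg s w] by simp
    thus "spanned_by_normal ?k (fa_word (?pre @ Tg s # map Eg (K # C) @ [Tg w]))"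
      by (rule spanned_mod_cong[OF push_T_into_normal[OF s KC w pre]])
  qed
  ultimately show ?thesis by (rule spanned_mod_cong)
qed

text \<open>An adjacent pair e_H e_K with K = H or K not transversal to H shortens the word: by (2)
  if H = K; otherwise H and K meet in a noncrossing edge and (6) or (5) applies.\<close>
lemma reduce_adjacent_pair:
  assumes E: "set E \<subseteq> hyps n G" and H: "H \<in> hyps n G" and K: "K \<in> hyps n G" and C: "set C \<subseteq> hyps n G"
    and w: "w \<in> G" and bad: "H = K \<or> \<not> transversal n G H K"
  shows "spanned_by_normal (length E + length C + 1) (fa_word (map Eg E @ [Eg H, Eg K] @ map Eg C @ [Tg w]))"
    (is "spanned_by_normal ?k (fa_word (?pre @ _ @ ?suf))")
proof -
  have pre: "set ?pre \<subseteq> B_gens n G" and suf: "set ?suf \<subseteq> B_gens n G"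
    using Eg_gens[OF E] Eg_gens[OF C] Tg_gen[OF w] by auto
  consider (equal) "H = K" | (empty) "H \<noteq> K" "noncrossing_edge n G (H \<inter> K)" "R_between n G H K = {}"
    | (refls) "H \<noteq> K" "noncrossing_edge n G (H \<inter> K)" "R_between n G H K \<noteq> {}"
    using bad not_transversal_noncrossing[OF fprg H K] by blast
  thus ?thesis
  proof cases
    case equal
    have "spanned_by_normal ?k (fa_smult (tau H) (fa_word (map Eg (E @ H # C) @ [Tg w])))"
      using E H C w by (intro spanned_mod_smult normal_word_spanned) auto
    moreover have "congB (fa_word (?pre @ [Eg H, Eg H] @ ?suf))
        (fa_smult (tau H) (fa_word (map Eg (E @ H # C) @ [Tg w])))"
      using cong_mod_in_word[OF pre suf rel_E_idem[OF H]]
      by (simp add: fa_mult_smult_right fa_mult_smult_left fa_mult_word)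
    ultimately show ?thesis unfolding equal[symmetric] by (rule spanned_mod_cong[rotated])
  next
    case empty
    have "congB (fa_word (?pre @ [Eg H, Eg K] @ ?suf)) (\<lambda>w. 0)"
      using cong_mod_in_word[OF pre suf rel_E_vanish[OF H K empty]] by simp
    thus ?thesis using spanned_mod_cong spanned_mod_zero by blast
  next
    case refls
    show ?thesis by (rule reduce_via_reflections[OF E H K C w refls])
  qed
qed

lemma E_word_spanned:
  "set hs \<subseteq> hyps n G \<Longrightarrow> w \<in> G \<Longrightarrow> spanned_by_normal (card (hyps n G)) (fa_word (map Eg hs @ [Tg w]))"
proof (induction "length hs" arbitrary: hs w rule: less_induct)
  case less
  show ?case
  proof (cases "length hs \<le> card (hyps n G)")
    case True
    thus ?thesis using normal_word_spanned less.prems by blast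
  next
    case False
    then obtain A H B K C where hs: "hs = A @ H # B @ K # C"
      and tr: "\<forall>X\<in>set B. X \<noteq> H \<and> transversal n G H X" and bad: "H = K \<or> \<not> transversal n G H K"
      using long_word_pattern[OF less.prems(1)] by auto
    let ?k = "length (A @ B) + length C + 1"
    have sets: "set (A @ B) \<subseteq> hyps n G" "H \<in> hyps n G" "set B \<subseteq> hyps n G" "K \<in> hyps n G"
      "set C \<subseteq> hyps n G" "set A \<subseteq> hyps n G"
      using less.prems(1) hs by auto
    have "set (Eg K # map Eg C @ [Tg w]) \<subseteq> B_gens n G"
      using Eg_gen[OF sets(4)] Eg_gens[OF sets(5)] Tg_gen[OF less.prems(2)] by auto
    from commute_E_through[OF sets(2,3) _ this Eg_gens[OF sets(6)]]
    have "congB (fa_word (map Eg hs @ [Tg w])) (fa_word (map Eg (A @ B) @ [Eg H, Eg K] @ map Eg C @ [Tg w]))"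
      using tr hs by simp
    moreover have "spanned_by_normal ?k (fa_word (map Eg (A @ B) @ [Eg H, Eg K] @ map Eg C @ [Tg w]))"
      using reduce_adjacent_pair[OF sets(1,2,4,5) less.prems(2) bad] .
    ultimately have "spanned_by_normal ?k (fa_word (map Eg hs @ [Tg w]))"
      by (rule spanned_mod_cong)
    moreover have "spanned_by_normal (card (hyps n G)) x" if x_normal: "x \<in> normal_words ?k" for x
    proof -
      obtain hs' w' where x: "x = fa_word (map Eg hs' @ [Tg w'])" and hs': "set hs' \<subseteq> hyps n G"
        and len: "length hs' \<le> ?k" and w': "w' \<in> G"
        using x_normal unfolding normal_words_def by blast
      have "length hs' < length hs" using len hs by simp
      thus ?thesis using less.hyps hs' w' unfolding x by blast
    qed
    ultimately show ?thesis by (rule spanned_mod_trans[OF normal_words_finite])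
  qed
qed

text \<open>Every word is spanned by the normal words: letters are absorbed from the left, T_g by
  pushing it to the end and e_H by the previous lemma.\<close>
lemma word_spanned:
  "set u \<subseteq> B_gens n G \<Longrightarrow> spanned_by_normal (card (hyps n G)) (fa_word u)"
proof (induction u)
  case Nil
  have "spanned_by_normal (card (hyps n G)) (fa_word (map Eg [] @ [Tg (1\<^sub>m n)]))"
    using G_one[OF fprg] by (intro normal_word_spanned) auto
  thus ?case using spanned_mod_cong[OF cong_mod_sym[OF rel_T_one]] by simp
next
  case (Cons x u)
  have x: "fa_word [x] \<in> FA (B_gens n G)" using Cons.prems by (intro fa_word_FA) auto
  have u: "spanned_by_normal (card (hyps n G)) (fa_word u)" using Cons by simp
  have "spanned_by_normal (card (hyps n G)) (fa_mult (fa_word [x]) y)" if y_normal: "y \<in> normal_words (card (hyps n G))" for y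
  proof -
    obtain hs w where y: "y = fa_word (map Eg hs @ [Tg w])" and hs: "set hs \<subseteq> hyps n G"
      and len: "length hs \<le> card (hyps n G)" and w: "w \<in> G"
      using y_normal unfolding normal_words_def by blast
    from Cons.prems consider (T) g where "x = Tg g" "g \<in> G" | (E) H where "x = Eg H" "H \<in> hyps n G"
      unfolding B_gens_def by auto
    thus ?thesis
    proof cases
      case T
      have "spanned_by_normal (card (hyps n G)) (fa_word (map Eg (map (img g) hs) @ [Tg (g * w)]))"
        using img_hyps_list[OF T(2) hs] len G_mult[OF fprg T(2) w] by (intro normal_word_spanned) auto
      moreover have "congB (fa_word (Tg g # map Eg hs @ [Tg w])) (fa_word (map Eg (map (img g) hs) @ [Tg (g * w)]))"
        using push_T_into_normal[OF T(2) hs w, of "[]"] by simp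
      ultimately have "spanned_by_normal (card (hyps n G)) (fa_word (Tg g # map Eg hs @ [Tg w]))"
        by (rule spanned_mod_cong[rotated])
      thus ?thesis using T(1) y by (simp add: fa_mult_word)
    next
      case E
      have "spanned_by_normal (card (hyps n G)) (fa_word (map Eg (H # hs) @ [Tg w]))"
        using E hs w by (intro E_word_spanned) auto
      thus ?thesis using E(1) y by (simp add: fa_mult_word)
    qed
  qed
  hence "spanned_by_normal (card (hyps n G)) (fa_mult (fa_word [x]) (fa_word u))"
    by (rule spanned_mod_lmult[OF x normal_words_finite u])
  thus ?case by (simp add: fa_mult_word)
qed

lemma FA_spanned: "f \<in> FA (B_gens n G) \<Longrightarrow> spanned_by_normal (card (hyps n G)) f"
proof -
  assume f: "f \<in> FA (B_gens n G)"
  have "spanned_by_normal (card (hyps n G)) (fa_lincomb f fa_word {w. f w \<noteq> 0})"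
    using f word_spanned unfolding FA_def by (intro spanned_mod_lincomb) auto
  thus ?thesis using FA_word_expansion[OF f] by simp
qed

end

section \<open>Injectivity: the regular representation\<close>

text \<open>A word acts on a group element q of the regular representation: T_g multiplies from
  the left and every e_H acts by zero (result None).\<close>
fun word_action :: "bgen list \<Rightarrow> complex mat \<Rightarrow> complex mat option" where
  "word_action [] q = Some q"
| "word_action (Tg g # u) q = map_option (\<lambda>p. g * p) (word_action u q)"
| "word_action (Eg H # u) q = None"

lemma word_action_append: "word_action (u @ v) q = Option.bind (word_action v q) (word_action u)"
proof (induction u)
  case Nil
  then show ?case by (cases "word_action v q") auto
next
  case (Cons a u)
  then show ?case by (cases a; cases "word_action v q") auto
qed

lemma word_action_Eg: "Eg H \<in> set u \<Longrightarrow> word_action u q = None"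
proof (induction u)
  case (Cons a u)
  then show ?case by (cases a) auto
qed simp

lemma word_action_carrier:
  "set u \<subseteq> Tg ` G \<union> Eg ` Hs \<Longrightarrow> G \<subseteq> carrier_mat n n \<Longrightarrow> q \<in> carrier_mat n n \<Longrightarrow>
    word_action u q = Some q' \<Longrightarrow> q' \<in> carrier_mat n n"
proof (induction u arbitrary: q')
  case (Cons a u)
  then show ?case by (cases a) auto
qed simp

definition finite_support :: "('g list \<Rightarrow> complex) \<Rightarrow> bool" where
  "finite_support f \<longleftrightarrow> finite {w. f w \<noteq> 0}"

definition reg_coeff :: "(bgen list \<Rightarrow> complex) \<Rightarrow> complex mat \<Rightarrow> complex mat \<Rightarrow> complex" where
  "reg_coeff x q m = (\<Sum>u\<in>{w. x w \<noteq> 0}. x u * (if word_action u q = Some m then 1 else 0))"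

lemma fa_mult_nonzero: "fa_mult f g w \<noteq> 0 \<Longrightarrow> \<exists>k. f (take k w) \<noteq> 0 \<and> g (drop k w) \<noteq> 0"
  unfolding fa_mult_def by (metis (no_types, lifting) mult_eq_0_iff sum.neutral)

lemma support_mult: "{w. fa_mult f g w \<noteq> 0} \<subseteq> (\<lambda>(u, v). u @ v) ` ({w. f w \<noteq> 0} \<times> {w. g w \<noteq> 0})"
proof
  fix w assume "w \<in> {w. fa_mult f g w \<noteq> 0}"
  then obtain k where "f (take k w) \<noteq> 0" "g (drop k w) \<noteq> 0" using fa_mult_nonzero by blast
  thus "w \<in> (\<lambda>(u, v). u @ v) ` ({w. f w \<noteq> 0} \<times> {w. g w \<noteq> 0})"
    by (intro image_eqI[of _ _ "(take k w, drop k w)"]) auto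
qed

lemma finite_support_mult: "finite_support f \<Longrightarrow> finite_support g \<Longrightarrow> finite_support (fa_mult f g)"
  unfolding finite_support_def using support_mult finite_subset by blast

lemma finite_support_gen: "finite_support (fa_gen a)"
  and finite_support_word: "finite_support (fa_word u)"
  and finite_support_zero: "finite_support (\<lambda>w. 0)"
  unfolding finite_support_def fa_gen_def fa_word_def by simp_all

lemma finite_support_add: "finite_support f \<Longrightarrow> finite_support g \<Longrightarrow> finite_support (fa_add f g)"
  unfolding finite_support_def fa_add_def
  by (rule finite_subset[of _ "{w. f w \<noteq> 0} \<union> {w. g w \<noteq> 0}"]) auto

lemma finite_support_sub: "finite_support f \<Longrightarrow> finite_support g \<Longrightarrow> finite_support (fa_sub f g)"
  unfolding finite_support_def fa_sub_def
  by (rule finite_subset[of _ "{w. f w \<noteq> 0} \<union> {w. g w \<noteq> 0}"]) auto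

lemma finite_support_smult: "finite_support f \<Longrightarrow> finite_support (fa_smult c f)"
  unfolding finite_support_def fa_smult_def by (rule finite_subset[of _ "{w. f w \<noteq> 0}"]) auto

lemma finite_support_lincomb:
  "finite R \<Longrightarrow> (\<And>s. s \<in> R \<Longrightarrow> finite_support (b s)) \<Longrightarrow> finite_support (fa_lincomb c b R)"
  by (induction R rule: finite_induct)
    (simp_all add: fa_lincomb_empty fa_lincomb_insert finite_support_zero finite_support_add finite_support_smult)

lemma reg_coeff_superset:
  assumes "finite S" "{w. x w \<noteq> 0} \<subseteq> S"
  shows "reg_coeff x q m = (\<Sum>u\<in>S. x u * (if word_action u q = Some m then 1 else 0))"
  unfolding reg_coeff_def by (rule sum.mono_neutral_left) (use assms in auto)

lemma reg_coeff_add: "finite_support f \<Longrightarrow> finite_support g \<Longrightarrow> reg_coeff (fa_add f g) q m = reg_coeff f q m + reg_coeff g q m"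
  and reg_coeff_sub: "finite_support f \<Longrightarrow> finite_support g \<Longrightarrow> reg_coeff (fa_sub f g) q m = reg_coeff f q m - reg_coeff g q m"
proof -
  assume "finite_support f" "finite_support g"
  hence fin: "finite ({w. f w \<noteq> 0} \<union> {w. g w \<noteq> 0})" unfolding finite_support_def by simp
  note sup = reg_coeff_superset[OF fin]
  show "reg_coeff (fa_add f g) q m = reg_coeff f q m + reg_coeff g q m"
    by (subst (1 2 3) sup) (auto simp: fa_add_def sum.distrib algebra_simps)
  show "reg_coeff (fa_sub f g) q m = reg_coeff f q m - reg_coeff g q m"
    by (subst (1 2 3) sup) (auto simp: fa_sub_def sum_subtractf algebra_simps)
qed

lemma reg_coeff_smult: "finite_support f \<Longrightarrow> reg_coeff (fa_smult c f) q m = c * reg_coeff f q m"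
  using reg_coeff_superset[of "{w. f w \<noteq> 0}" "fa_smult c f"]
  by (auto simp: reg_coeff_def finite_support_def fa_smult_def sum_distrib_left algebra_simps)

lemma reg_coeff_word: "reg_coeff (fa_word u) q m = (if word_action u q = Some m then 1 else 0)"
  using reg_coeff_superset[of "{u}" "fa_word u"] by (auto simp: fa_word_def)

lemma reg_coeff_zero: "reg_coeff (\<lambda>w. 0) q m = 0"
  unfolding reg_coeff_def by simp

lemma reg_coeff_lincomb: "finite R \<Longrightarrow> (\<And>s. s \<in> R \<Longrightarrow> finite_support (b s)) \<Longrightarrow>
    reg_coeff (fa_lincomb c b R) q m = (\<Sum>s\<in>R. c s * reg_coeff (b s) q m)"
  by (induction R rule: finite_induct)
    (simp_all add: fa_lincomb_empty fa_lincomb_insert reg_coeff_zero reg_coeff_add reg_coeff_smult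
      finite_support_smult finite_support_lincomb)

lemma reg_coeff_mult_pairs:
  assumes f: "finite_support f" and g: "finite_support g"
  shows "reg_coeff (fa_mult f g) q m = (\<Sum>(u, v)\<in>{w. f w \<noteq> 0} \<times> {w. g w \<noteq> 0}.
            f u * g v * (if word_action (u @ v) q = Some m then 1 else 0))"
proof -
  let ?Sf = "{w. f w \<noteq> 0}" and ?Sg = "{w. g w \<noteq> 0}"
  let ?W = "(\<lambda>(u, v). u @ v) ` (?Sf \<times> ?Sg)"
  let ?F = "\<lambda>w. if word_action w q = Some m then 1 else (0::complex)"
  let ?P = "Sigma ?W (\<lambda>w. {..length w})"
  let ?h = "\<lambda>(u::bgen list, v::bgen list). (u @ v, length u)"
  let ?t = "\<lambda>(w, k). f (take k w) * g (drop k w) * ?F w"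
  have finW: "finite ?W" using f g unfolding finite_support_def by simp
  have "reg_coeff (fa_mult f g) q m = (\<Sum>w\<in>?W. \<Sum>k\<le>length w. f (take k w) * g (drop k w) * ?F w)"
    using reg_coeff_superset[OF finW support_mult] by (simp add: fa_mult_def sum_distrib_right)
  also have "\<dots> = (\<Sum>p\<in>?P. ?t p)"
    by (rule sum.Sigma) (use finW in auto)
  also have "\<dots> = (\<Sum>p\<in>?h ` (?Sf \<times> ?Sg). ?t p)"
  proof (rule sum.mono_neutral_right)
    show "finite ?P" using finW by auto
    show "?h ` (?Sf \<times> ?Sg) \<subseteq> ?P" by force
    show "\<forall>p\<in>?P - ?h ` (?Sf \<times> ?Sg). ?t p = 0"
    proof
      fix p assume p: "p \<in> ?P - ?h ` (?Sf \<times> ?Sg)"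
      obtain w k where pw: "p = (w, k)" by (cases p) blast
      have k: "k \<le> length w" using p pw by auto
      show "?t p = 0"
      proof (rule ccontr)
        assume "?t p \<noteq> 0"
        hence mem: "(take k w, drop k w) \<in> ?Sf \<times> ?Sg" using pw by auto
        have eq: "p = ?h (take k w, drop k w)" using pw k by simp
        have "p \<in> ?h ` (?Sf \<times> ?Sg)" by (rule image_eqI[where f = "?h", OF eq mem])
        thus False using p by blast
      qed
    qed
  qed
  also have "\<dots> = (\<Sum>(u, v)\<in>?Sf \<times> ?Sg. f u * g v * ?F (u @ v))"
    by (rule sum.reindex_cong[where l="?h"]) (auto simp: inj_on_def)
  finally show ?thesis .
qed

definition action_targets :: "(bgen list \<Rightarrow> complex) \<Rightarrow> complex mat \<Rightarrow> complex mat set" where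
  "action_targets g q = {q'. \<exists>v. g v \<noteq> 0 \<and> word_action v q = Some q'}"

lemma action_targets_finite: "finite_support g \<Longrightarrow> finite (action_targets g q)"
proof -
  assume "finite_support g"
  moreover have "action_targets g q \<subseteq> (\<lambda>v. the (word_action v q)) ` {v. g v \<noteq> 0}"
    unfolding action_targets_def by force
  ultimately show ?thesis unfolding finite_support_def using finite_surj by blast
qed

text \<open>The coefficients are multiplicative: they are the matrix entries of a representation
  of the free algebra on the space with basis the matrices.\<close>
lemma reg_coeff_mult:
  assumes f: "finite_support f" and g: "finite_support g"
  shows "reg_coeff (fa_mult f g) q m = (\<Sum>q'\<in>action_targets g q. reg_coeff f q' m * reg_coeff g q q')"
proof -
  let ?Sf = "{w. f w \<noteq> 0}" and ?Sg = "{w. g w \<noteq> 0}" and ?Q = "action_targets g q"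
  let ?I = "\<lambda>b. if b then (1::complex) else 0"
  have split: "?I (word_action (u @ v) q = Some m)
      = (\<Sum>q'\<in>?Q. ?I (word_action u q' = Some m) * ?I (word_action v q = Some q'))"
    if v: "v \<in> ?Sg" for u v
  proof (cases "word_action v q")
    case None
    then show ?thesis by (simp add: word_action_append)
  next
    case (Some q0)
    have "q0 \<in> ?Q" using v Some unfolding action_targets_def by blast
    hence "(\<Sum>q'\<in>?Q. ?I (word_action u q' = Some m) * ?I (word_action v q = Some q'))
        = ?I (word_action u q0 = Some m)"
      using action_targets_finite[OF g] Some by (simp add: if_distrib[of "\<lambda>x. _ * x"] cong: if_cong)
    thus ?thesis using Some by (simp add: word_action_append)
  qed
  have "reg_coeff (fa_mult f g) q m = (\<Sum>u\<in>?Sf. \<Sum>v\<in>?Sg. f u * g v * ?I (word_action (u @ v) q = Some m))"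
    unfolding reg_coeff_mult_pairs[OF f g] sum.cartesian_product ..
  also have "\<dots> = (\<Sum>u\<in>?Sf. \<Sum>v\<in>?Sg. \<Sum>q'\<in>?Q.
      (f u * ?I (word_action u q' = Some m)) * (g v * ?I (word_action v q = Some q')))"
    using split by (intro sum.cong refl) (simp add: sum_distrib_left ac_simps)
  also have "\<dots> = (\<Sum>q'\<in>?Q. \<Sum>u\<in>?Sf. \<Sum>v\<in>?Sg.
      (f u * ?I (word_action u q' = Some m)) * (g v * ?I (word_action v q = Some q')))"
    by (subst sum.swap, rule sum.cong[OF refl], rule sum.swap)
  also have "\<dots> = (\<Sum>q'\<in>?Q. reg_coeff f q' m * reg_coeff g q q')"
    unfolding reg_coeff_def sum_product ..
  finally show ?thesis .
qed

definition kills_regular :: "nat \<Rightarrow> (bgen list \<Rightarrow> complex) \<Rightarrow> bool" where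
  "kills_regular n x \<longleftrightarrow> finite_support x \<and> (\<forall>q\<in>carrier_mat n n. \<forall>m. reg_coeff x q m = 0)"

definition E_supported :: "(bgen list \<Rightarrow> complex) \<Rightarrow> bool" where
  "E_supported f \<longleftrightarrow> (\<forall>u. f u \<noteq> 0 \<longrightarrow> (\<exists>H. Eg H \<in> set u))"

lemma E_supported_kills: "finite_support x \<Longrightarrow> E_supported x \<Longrightarrow> kills_regular n x"
  unfolding kills_regular_def E_supported_def reg_coeff_def by (auto intro!: sum.neutral simp: word_action_Eg)

lemma E_supported_gen: "E_supported (EE H)"
  unfolding E_supported_def fa_gen_def by auto

lemma E_supported_mult: "E_supported f \<or> E_supported g \<Longrightarrow> E_supported (fa_mult f g)"
  unfolding E_supported_def by (metis fa_mult_nonzero in_set_dropD in_set_takeD)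

lemma E_supported_sub: "E_supported f \<Longrightarrow> E_supported g \<Longrightarrow> E_supported (fa_sub f g)"
  and E_supported_smult: "E_supported f \<Longrightarrow> E_supported (fa_smult c f)"
  unfolding E_supported_def fa_sub_def fa_smult_def by (metis diff_zero eq_iff_diff_eq_0, auto)

lemma kills_T_one: "kills_regular n (fa_sub (TT (1\<^sub>m n)) fa_one)"
  unfolding kills_regular_def
  by (simp add: finite_support_sub finite_support_gen fa_one_word finite_support_word reg_coeff_sub
      reg_coeff_word fa_gen_word)

lemma kills_T_mult:
  assumes "w1 \<in> carrier_mat n n" "w2 \<in> carrier_mat n n"
  shows "kills_regular n (fa_sub (fa_mult (TT w1) (TT w2)) (TT (w1 * w2)))"
proof -
  have "w1 * w2 * q = w1 * (w2 * q)" if "q \<in> carrier_mat n n" for q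
    by (rule assoc_mult_mat[OF assms that])
  thus ?thesis unfolding kills_regular_def fa_gen_word fa_mult_word
    by (simp add: finite_support_sub finite_support_word reg_coeff_sub reg_coeff_word)
qed

context
  fixes n :: nat and G :: "complex mat set" and mu :: "complex mat \<Rightarrow> complex"
    and tau :: "complex vec set \<Rightarrow> complex"
  assumes fprg: "finite_pseudo_reflection_group n G"
begin

text \<open>Every defining relation acts by zero in the regular representation: (0) and the unit
  relation hold for matrices, and all other relations involve an e in every word.\<close>
lemma B_rels_kill: "r \<in> B_rels n G mu tau \<Longrightarrow> kills_regular n r"
  unfolding B_rels_def Un_iff
  by (elim disjE; clarsimp simp: kills_T_one kills_T_mult G_carrier[OF fprg];
      rule E_supported_kills;
      simp add: R_between_finite[OF fprg] finite_support_sub finite_support_mult finite_support_gen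
        finite_support_smult finite_support_lincomb E_supported_sub E_supported_mult
        E_supported_smult E_supported_gen)

text \<open>Hence so does the whole ideal. For a left multiple a x use multiplicativity of the
  coefficients; for a right multiple x a note that the words of a move q to other matrices.\<close>
lemma B_ideal_kills: "x \<in> B_ideal n G mu tau \<Longrightarrow> kills_regular n x"
  unfolding B_ideal_def
proof (induction x rule: fa_ideal.induct)
  case (base r)
  then show ?case by (rule B_rels_kill)
next
  case zero
  then show ?case unfolding kills_regular_def by (simp add: finite_support_zero reg_coeff_zero)
next
  case (add x y)
  then show ?case unfolding kills_regular_def by (simp add: finite_support_add reg_coeff_add)
next
  case (smult x c)
  then show ?case unfolding kills_regular_def by (simp add: finite_support_smult reg_coeff_smult)
next
  case (lmult a x)
  have a: "finite_support a" using lmult.hyps(1) unfolding FA_def finite_support_def by simp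
  show ?case
    using lmult.IH a unfolding kills_regular_def by (simp add: finite_support_mult reg_coeff_mult)
next
  case (rmult a x)
  have a: "finite_support a" using rmult.hyps(1) unfolding FA_def finite_support_def by simp
  have targets: "action_targets a q \<subseteq> carrier_mat n n" if "q \<in> carrier_mat n n" for q
  proof
    fix q' assume "q' \<in> action_targets a q"
    then obtain v where "a v \<noteq> 0" "word_action v q = Some q'" unfolding action_targets_def by blast
    moreover have "set v \<subseteq> Tg ` G \<union> Eg ` hyps n G"
      using rmult.hyps(1) \<open>a v \<noteq> 0\<close> unfolding FA_def B_gens_def by blast
    ultimately show "q' \<in> carrier_mat n n"
      using word_action_carrier G_carrier[OF fprg] that by blast
  qed
  have x: "finite_support x" and x0: "\<And>q m. q \<in> carrier_mat n n \<Longrightarrow> reg_coeff x q m = 0"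
    using rmult.IH unfolding kills_regular_def by auto
  have "reg_coeff (fa_mult x a) q m = 0" if q: "q \<in> carrier_mat n n" for q m
  proof -
    have "reg_coeff x q' m = 0" if "q' \<in> action_targets a q" for q'
      using x0 targets[OF q] that by blast
    thus ?thesis by (simp add: reg_coeff_mult[OF x a])
  qed
  thus ?case using x a unfolding kills_regular_def by (simp add: finite_support_mult)
qed

text \<open>The T_w are linearly independent modulo the ideal: the coefficient of w in x acting on
  the identity matrix recovers the coefficient of T_w.\<close>
lemma T_independent:
  assumes "fa_lincomb c TT G \<in> B_ideal n G mu tau" "w \<in> G"
  shows "c w = 0"
proof -
  have "0 = reg_coeff (fa_lincomb c TT G) (1\<^sub>m n) w"
    using B_ideal_kills[OF assms(1)] unfolding kills_regular_def by simp
  also have "\<dots> = (\<Sum>g\<in>G. c g * reg_coeff (TT g) (1\<^sub>m n) w)"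
    by (rule reg_coeff_lincomb[OF G_finite[OF fprg] finite_support_gen])
  also have "\<dots> = (\<Sum>g\<in>G. if g = w then c g else 0)"
  proof (rule sum.cong[OF refl])
    fix g assume "g \<in> G"
    hence "g * 1\<^sub>m n = g" by (rule right_mult_one_mat[OF G_carrier[OF fprg]])
    thus "c g * reg_coeff (TT g) (1\<^sub>m n) w = (if g = w then c g else 0)"
      by (simp add: fa_gen_word reg_coeff_word)
  qed
  also have "\<dots> = c w" using G_finite[OF fprg] assms(2) by simp
  finally show ?thesis by simp
qed

end

theorem theorem5p1:
  fixes n :: nat and G :: "complex mat set"
    and mu :: "complex mat \<Rightarrow> complex" and tau :: "complex vec set \<Rightarrow> complex"
  assumes "finite_pseudo_reflection_group n G"
    and "admissible n G mu tau"
  shows "(\<exists>S. finite S \<and> S \<subseteq> FA (B_gens n G) \<and>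
            (\<forall>f \<in> FA (B_gens n G). \<exists>c. fa_sub f (fa_lincomb c (\<lambda>b. b) S) \<in> B_ideal n G mu tau))
       \<and> fa_sub (TT (1\<^sub>m n)) fa_one \<in> B_ideal n G mu tau
       \<and> (\<forall>w1\<in>G. \<forall>w2\<in>G. fa_sub (fa_mult (TT w1) (TT w2)) (TT (w1 * w2)) \<in> B_ideal n G mu tau)
       \<and> (\<forall>c :: complex mat \<Rightarrow> complex.
            fa_lincomb c TT G \<in> B_ideal n G mu tau \<longrightarrow> (\<forall>w\<in>G. c w = 0))"
proof (intro conjI ballI allI impI)
  let ?S = "normal_words n G (card (hyps n G))"
  have "\<forall>f \<in> FA (B_gens n G). \<exists>c. fa_sub f (fa_lincomb c (\<lambda>b. b) ?S) \<in> B_ideal n G mu tau"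
    using FA_spanned[OF assms(1)] unfolding spanned_mod_def cong_mod_def B_ideal_def by blast
  thus "\<exists>S. finite S \<and> S \<subseteq> FA (B_gens n G) \<and>
      (\<forall>f \<in> FA (B_gens n G). \<exists>c. fa_sub f (fa_lincomb c (\<lambda>b. b) S) \<in> B_ideal n G mu tau)"
    using normal_words_finite[OF assms(1)] normal_words_FA[OF assms(1)] by blast
  show "fa_sub (TT (1\<^sub>m n)) fa_one \<in> B_ideal n G mu tau"
    unfolding B_ideal_def by (rule fa_ideal.base[OF B_rels_T_one])
  show "fa_sub (fa_mult (TT w1) (TT w2)) (TT (w1 * w2)) \<in> B_ideal n G mu tau" if "w1 \<in> G" "w2 \<in> G" for w1 w2
    unfolding B_ideal_def by (rule fa_ideal.base[OF B_rels_T_mult[OF that]])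
  show "c w = 0" if "fa_lincomb c TT G \<in> B_ideal n G mu tau" "w \<in> G" for c w
    by (rule T_independent[OF assms(1) that])
qed

end
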